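(* For every $f\in\hat\Lambda$, \[\mathcal{T}(f) = \mathrm{inv}\Delta\big(f \circ \operatorname{Exp}(p_1)\big) \circ \operatorname{Log}(1 + p_1). \]
   Context: $\hat\Lambda=\mathbb{Q}[\![p_1,p_2,\ldots]\!]$ is the ring of degree-completed symmetric functions. $\mathcal{T}:\hat\Lambda\to\hat\Lambda[\![x]\!]$ is the $\mathbb{Q}$-algebra homomorphism $p_n\mapsto(p_n+x^n)/(1-x^n)$. Plethysm $\circ$ is the operation characterized by: $f\mapsto f\circ h$ and $f\mapsto p_k\circ f$ are $\mathbb{Q}$-algebra homomorphisms and $p_k\circ f=f\circ p_k=f(p_k,p_{2k},\ldots)$; it is defined on $\hat\Lambda\times\hat\Lambda_+$ ($\hat\Lambda_+$ = zero constant term) and extended to $\hat\Lambda[\![x]\!]$ by $x\circ f=x$ and $p_n\circ x=x^n$. $\operatorname{Exp}(f)=\sum_{n>0}h_n\circ f$, with $h_n$ the complete homogeneous symmetric function (Frobenius characteristic of the trivial $\mathbb{S}_n$-representation), and $\operatorname{Log}(1+f)=\sum_{n\ge1}\frac{\mu(n)}{n}\log(1+p_n\circ f)$. The coproduct $\Delta:\hat\Lambda\to\mathbb{Q}[\![p_1,p_2,\ldots,q_1,q_2,\ldots]\!]$ is the algebra map $p_i\mapsto p_i+q_i$, and $\mathrm{inv}\Delta:\hat\Lambda\to\hat\Lambda[\![x]\!]$ is $\Delta$ followed by the algebra map $p_i\mapsto x^i$, $q_i\mapsto p_i$. *)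

theory Defs
  imports Complex_Main "HOL-Library.Multiset" "HOL-Computational_Algebra.Squarefree"
begin

text \<open>
  Elements of the ring Lambda-hat[[x]] (degree-completed symmetric functions in the power sums,
  with an extra formal variable x) are represented by their coefficient functions on monomials.
  A monomial is a multiset M of natural numbers: an occurrence of 0 stands for the variable x,
  an occurrence of n > 0 stands for the power sum p_n.
  Lambda-hat itself consists of those series whose coefficients vanish on monomials containing x.
\<close>

type_synonym sfx = "nat multiset \<Rightarrow> rat"

text \<open>Weight of a monomial: x has weight 1, p_n has weight n. Every coefficient of every
  series below only involves finitely many monomials of bounded weight.\<close>
definition wt :: "nat multiset \<Rightarrow> nat" where
  "wt M = sum_mset (image_mset (\<lambda>i. max i 1) M)"

definition sf_one :: sfx where
  "sf_one M = (if M = {#} then 1 else 0)"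

definition sf_var :: "nat \<Rightarrow> sfx" where
  "sf_var n M = (if M = {#n#} then 1 else 0)"

definition sf_add :: "sfx \<Rightarrow> sfx \<Rightarrow> sfx" where
  "sf_add f g M = f M + g M"

definition sf_smult :: "rat \<Rightarrow> sfx \<Rightarrow> sfx" where
  "sf_smult c f M = c * f M"

definition sf_mult :: "sfx \<Rightarrow> sfx \<Rightarrow> sfx" where
  "sf_mult f g M = (\<Sum>A\<in>{A. A \<subseteq># M}. f A * g (M - A))"

primrec sf_pow :: "sfx \<Rightarrow> nat \<Rightarrow> sfx" where
  "sf_pow f 0 = sf_one"
| "sf_pow f (Suc n) = sf_mult f (sf_pow f n)"

definition monprod :: "(nat \<Rightarrow> sfx) \<Rightarrow> nat multiset \<Rightarrow> sfx" where
  "monprod \<sigma> M = foldr sf_mult (map \<sigma> (sorted_list_of_multiset M)) sf_one"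

text \<open>The continuous Q-algebra homomorphism sending x to sigma 0 and p_n to sigma n.
  It is only used with substitutions where sigma i has no monomials of weight below max i 1,
  so truncating the sum at weight wt M' is exact.\<close>
definition subst :: "(nat \<Rightarrow> sfx) \<Rightarrow> sfx \<Rightarrow> sfx" where
  "subst \<sigma> f M' = (\<Sum>M\<in>{M. wt M \<le> wt M'}. f M * monprod \<sigma> M M')"

text \<open>p_k composed with g (k > 0): p_n maps to p_(kn), x maps to x^k.\<close>
definition pleth_p :: "nat \<Rightarrow> sfx \<Rightarrow> sfx" where
  "pleth_p k g = subst (\<lambda>i. if i = 0 then sf_pow (sf_var 0) k else sf_var (k * i)) g"

text \<open>Plethysm f o g (g with zero constant term): x maps to x, p_n maps to p_n o g.\<close>
definition sf_pleth :: "sfx \<Rightarrow> sfx \<Rightarrow> sfx" where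
  "sf_pleth f g = subst (\<lambda>i. if i = 0 then sf_var 0 else pleth_p i g) f"

text \<open>The map T: p_n maps to (p_n + x^n)/(1 - x^n) = (p_n + x^n) * sum_(j>=0) x^(nj).\<close>
definition T_img :: "nat \<Rightarrow> sfx" where
  "T_img n M = (let k = count M 0; R = filter_mset (\<lambda>i. i \<noteq> 0) M in
      if R = {#} \<and> n dvd k \<and> n \<le> k then 1
      else if R = {#n#} \<and> n dvd k then 1 else 0)"

definition sf_T :: "sfx \<Rightarrow> sfx" where
  "sf_T f = subst (\<lambda>i. if i = 0 then sf_var 0 else T_img i) f"

text \<open>invDelta: p_i maps to p_i + q_i, then p_i to x^i and q_i to p_i; i.e. p_i maps to x^i + p_i.\<close>
definition sf_invDelta :: "sfx \<Rightarrow> sfx" where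
  "sf_invDelta f = subst (\<lambda>i. if i = 0 then sf_var 0 else sf_add (sf_pow (sf_var 0) i) (sf_var i)) f"

text \<open>z_lambda = prod_i i^(m_i) m_i!, and h_n = sum over partitions lambda of n of p_lambda / z_lambda.\<close>
definition zee :: "nat multiset \<Rightarrow> rat" where
  "zee M = (\<Prod>i\<in>set_mset M. of_nat (i ^ count M i * fact (count M i)))"

definition sf_h :: "nat \<Rightarrow> sfx" where
  "sf_h n M = (if 0 \<notin># M \<and> sum_mset M = n then 1 / zee M else 0)"

text \<open>Exp(f) = sum_(n>0) h_n o f (f with zero constant term; h_n o f has weight >= n).\<close>
definition sf_Exp :: "sfx \<Rightarrow> sfx" where
  "sf_Exp f M' = (\<Sum>n\<in>{1..wt M'}. sf_pleth (sf_h n) f M')"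

definition moebius :: "nat \<Rightarrow> int" where
  "moebius n = (if n > 0 \<and> squarefree n then (-1) ^ card (prime_factors n) else 0)"

definition sf_log1p :: "sfx \<Rightarrow> sfx" where
  "sf_log1p g M' = (\<Sum>k\<in>{1..wt M'}. (-1) ^ (k + 1) / of_nat k * sf_pow g k M')"

definition sf_Log :: "sfx \<Rightarrow> sfx" where
  "sf_Log F M' = (let f = (\<lambda>M. F M - sf_one M) in
     (\<Sum>n\<in>{1..wt M'}. of_int (moebius n) / of_nat n * sf_log1p (pleth_p n f) M'))"

end

theory Submission
  imports Defs "HOL-Computational_Algebra.Formal_Power_Series"
begin

text \<open>
  All series involved live in \<open>\<rat>[[x, p\<^sub>1, p\<^sub>2, \<dots>]]\<close>, and \<open>T\<close>, \<open>inv\<Delta>\<close> and plethysm with a fixed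
  inner series are continuous substitution homomorphisms, determined by the images of \<open>x\<close> and
  the \<open>p\<^sub>n\<close>. Composing them, it suffices to show that the right-hand side sends \<open>p\<^sub>i\<close> to
  \<open>(p\<^sub>i + x\<^sup>i)/(1 - x\<^sup>i)\<close>. By Cauchy's formula \<open>Exp(p\<^sub>1) = H - 1\<close> with \<open>H = exp(\<Sum>\<^sub>j p\<^sub>j/j)\<close>, so
  \<open>p\<^sub>i \<circ> Exp(p\<^sub>1) = exp(\<Sum>\<^sub>j p\<^sub>i\<^sub>j/j) - 1\<close>. Applying \<open>inv\<Delta>\<close> and then \<open>\<circ> Log(1 + p\<^sub>1)\<close> turns the
  exponent into \<open>\<Sum>\<^sub>j x\<^sup>i\<^sup>j/j + \<Sum>\<^sub>j \<Sum>\<^sub>n \<mu>(n)/(jn) log(1 + p\<^sub>i\<^sub>j\<^sub>n) = -log(1 - x\<^sup>i) + log(1 + p\<^sub>i)\<close>,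
  the double sum collapsing by Moebius inversion. Exponentiating gives \<open>(1 + p\<^sub>i)/(1 - x\<^sup>i)\<close>.
\<close>

unbundle fps_syntax

lemma wt_empty [simp]: "wt {#} = 0"
  by (simp add: wt_def)

lemma wt_add [simp]: "wt (A + B) = wt A + wt B"
  by (simp add: wt_def)

lemma wt_add_mset [simp]: "wt (add_mset i A) = max i 1 + wt A"
  by (simp add: wt_def)

lemma wt_replicate_mset [simp]: "wt (replicate_mset k i) = k * max i 1"
  by (induction k) auto

lemma wt_mono: "A \<subseteq># B \<Longrightarrow> wt A \<le> wt B"
  by (metis le_add1 subset_mset.add_diff_inverse wt_add)

lemma wt_diff: "A \<subseteq># B \<Longrightarrow> wt (B - A) = wt B - wt A"
  by (metis add_diff_cancel_left' subset_mset.add_diff_inverse wt_add)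

lemma size_le_wt: "size M \<le> wt M"
  by (induction M) auto

lemma in_mset_le_wt: "i \<in># M \<Longrightarrow> i \<le> wt M"
  by (induction M) auto

lemma wt_eq_0_iff: "wt M = 0 \<longleftrightarrow> M = {#}"
  using size_le_wt[of M] by auto

lemma wt_eq_sum_mset: "0 \<notin># M \<Longrightarrow> wt M = sum_mset M"
  by (induction M) auto

lemma finite_bounded_msets: "finite A \<Longrightarrow> finite {M. set_mset M \<subseteq> A \<and> size M \<le> n}"
proof -
  assume "finite A"
  have "{M. set_mset M \<subseteq> A \<and> size M \<le> n} = (\<Union>k\<le>n. multisets_of_size A k)"
    by (auto simp: multisets_of_size_def)
  then show ?thesis
    using \<open>finite A\<close> by auto
qed

lemma finite_wt_le: "finite {M. wt M \<le> w}"
proof (rule finite_subset)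
  show "{M. wt M \<le> w} \<subseteq> {M. set_mset M \<subseteq> {0..w} \<and> size M \<le> w}"
    using size_le_wt in_mset_le_wt by (force intro: order_trans)
qed (rule finite_bounded_msets, simp)

lemma finite_msubsets [simp]: "finite {A. A \<subseteq># M}"
proof (rule finite_subset)
  show "{A. A \<subseteq># M} \<subseteq> {A. set_mset A \<subseteq> set_mset M \<and> size A \<le> size M}"
    by (auto simp: size_mset_mono dest: mset_subset_eqD)
qed (rule finite_bounded_msets, simp)

lemma sum_msubsets_nested:
  "(\<Sum>A\<in>{A. A \<subseteq># M}. \<Sum>B\<in>{B. B \<subseteq># A}. F B (A - B) (M - A)) =
   (\<Sum>B\<in>{B. B \<subseteq># M}. \<Sum>C\<in>{C. C \<subseteq># M - B}. F B C (M - B - C))"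
proof -
  have "(\<Sum>A\<in>{A. A \<subseteq># M}. \<Sum>B\<in>{B. B \<subseteq># A}. F B (A - B) (M - A)) =
        (\<Sum>(A,B)\<in>Sigma {A. A \<subseteq># M} (\<lambda>A. {B. B \<subseteq># A}). F B (A - B) (M - A))"
    by (rule sum.Sigma) auto
  also have "\<dots> = (\<Sum>(B,C)\<in>Sigma {B. B \<subseteq># M} (\<lambda>B. {C. C \<subseteq># M - B}). F B C (M - B - C))"
  proof (rule sum.reindex_bij_witness[where j = "\<lambda>(A,B). (B, A - B)" and i = "\<lambda>(B,C). (B + C, B)"])
    fix a assume "a \<in> Sigma {A. A \<subseteq># M} (\<lambda>A. {B. B \<subseteq># A})"
    then obtain A B where a: "a = (A,B)" "A \<subseteq># M" "B \<subseteq># A" by auto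
    show "(case case a of (A, B) \<Rightarrow> (B, A - B) of (B, C) \<Rightarrow> (B + C, B)) = a"
      using a by auto
    show "(case a of (A, B) \<Rightarrow> (B, A - B)) \<in> Sigma {B. B \<subseteq># M} (\<lambda>B. {C. C \<subseteq># M - B})"
      using a by (simp add: subseteq_mset_def) (meson diff_le_mono order_trans)
    show "(case case a of (A, B) \<Rightarrow> (B, A - B) of (B, C) \<Rightarrow> F B C (M - B - C)) =
          (case a of (A, B) \<Rightarrow> F B (A - B) (M - A))"
      using a by (auto simp: subseteq_mset_def multiset_eq_iff)
  next
    fix b assume "b \<in> Sigma {B. B \<subseteq># M} (\<lambda>B. {C. C \<subseteq># M - B})"
    then obtain B C where b: "b = (B,C)" "B \<subseteq># M" "C \<subseteq># M - B" by auto
    show "(case case b of (B, C) \<Rightarrow> (B + C, B) of (A, B) \<Rightarrow> (B, A - B)) = b"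
      using b by auto
    show "(case b of (B, C) \<Rightarrow> (B + C, B)) \<in> Sigma {A. A \<subseteq># M} (\<lambda>A. {B. B \<subseteq># A})"
      using b by (simp add: subseteq_mset_def) (metis add.commute le_diff_conv2)
  qed
  also have "\<dots> = (\<Sum>B\<in>{B. B \<subseteq># M}. \<Sum>C\<in>{C. C \<subseteq># M - B}. F B C (M - B - C))"
    by (rule sum.Sigma[symmetric]) auto
  finally show ?thesis .
qed

lemma sum_msubsets_complement:
  "(\<Sum>A\<in>{A. A \<subseteq># M}. F A (M - A)) = (\<Sum>A\<in>{A. A \<subseteq># M}. F (M - A) A)"
  by (rule sum.reindex_bij_witness[where i = "\<lambda>A. M - A" and j = "\<lambda>A. M - A"])
     (auto simp: subset_mset.diff_diff_right)

lemma sum_msubsets_empty: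
  "(\<Sum>A\<in>{A. A \<subseteq># M}. (if A = {#} then c else 0) * F A) = c * (F {#} :: 'a :: semiring_0)"
proof -
  have "(\<Sum>A\<in>{A. A \<subseteq># M}. (if A = {#} then c else 0) * F A) =
        (\<Sum>A\<in>{A. A \<subseteq># M}. if A = {#} then c * F A else 0)"
    by (rule sum.cong) auto
  then show ?thesis
    by simp
qed

section \<open>The ring of series\<close>

typedef mseries = "UNIV :: sfx set"
  morphisms mcoeff Abs_mseries
  by auto

lemma mseries_eqI: "(\<And>M. mcoeff f M = mcoeff g M) \<Longrightarrow> f = g"
  by (metis mcoeff_inject ext)

lemma mcoeff_Abs_mseries [simp]: "mcoeff (Abs_mseries f) = f"
  by (simp add: Abs_mseries_inverse)

instantiation mseries :: comm_ring_1
begin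

definition "0 = Abs_mseries (\<lambda>_. 0)"
definition "1 = Abs_mseries sf_one"
definition "f + g = Abs_mseries (\<lambda>M. mcoeff f M + mcoeff g M)"
definition "f - g = Abs_mseries (\<lambda>M. mcoeff f M - mcoeff g M)"
definition "- f = Abs_mseries (\<lambda>M. - mcoeff f M)"
definition "f * g = Abs_mseries (sf_mult (mcoeff f) (mcoeff g))"

lemma mcoeff_0 [simp]: "mcoeff 0 M = 0"
  by (simp add: zero_mseries_def)

lemma mcoeff_1: "mcoeff 1 M = (if M = {#} then 1 else 0)"
  by (simp add: one_mseries_def sf_one_def)

lemma mcoeff_add [simp]: "mcoeff (f + g) M = mcoeff f M + mcoeff g M"
  by (simp add: plus_mseries_def)

lemma mcoeff_diff [simp]: "mcoeff (f - g) M = mcoeff f M - mcoeff g M"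
  by (simp add: minus_mseries_def)

lemma mcoeff_uminus [simp]: "mcoeff (- f) M = - mcoeff f M"
  by (simp add: uminus_mseries_def)

lemma mcoeff_mult: "mcoeff (f * g) M = (\<Sum>A\<in>{A. A \<subseteq># M}. mcoeff f A * mcoeff g (M - A))"
  by (simp add: times_mseries_def sf_mult_def)

instance
proof
  fix a b c :: mseries
  show "a * b * c = a * (b * c)"
  proof (rule mseries_eqI)
    fix M
    have "mcoeff (a * b * c) M = (\<Sum>A\<in>{A. A \<subseteq># M}. \<Sum>B\<in>{B. B \<subseteq># A}.
                                    mcoeff a B * mcoeff b (A - B) * mcoeff c (M - A))"
      by (simp add: mcoeff_mult sum_distrib_right)
    also have "\<dots> = (\<Sum>B\<in>{B. B \<subseteq># M}. \<Sum>C\<in>{C. C \<subseteq># M - B}.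
                       mcoeff a B * mcoeff b C * mcoeff c (M - B - C))"
      by (rule sum_msubsets_nested)
    also have "\<dots> = mcoeff (a * (b * c)) M"
      by (simp add: mcoeff_mult sum_distrib_left mult.assoc)
    finally show "mcoeff (a * b * c) M = mcoeff (a * (b * c)) M" .
  qed
  show "a * b = b * a"
    by (rule mseries_eqI)
       (simp add: mcoeff_mult sum_msubsets_complement[where F = "\<lambda>A B. mcoeff a A * mcoeff b B"] mult.commute)
  show "1 * a = a"
    by (rule mseries_eqI) (simp add: mcoeff_mult mcoeff_1 sum_msubsets_empty)
  show "(a + b) * c = a * c + b * c"
    by (rule mseries_eqI) (simp add: mcoeff_mult sum.distrib distrib_right)
  show "(0::mseries) \<noteq> 1"
    by (metis mcoeff_0 mcoeff_1 zero_neq_one)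
qed (auto intro: mseries_eqI)

end

lemma mcoeff_sum: "mcoeff (sum F A) M = (\<Sum>i\<in>A. mcoeff (F i) M)"
  by (induction A rule: infinite_finite_induct) auto

definition mvar :: "nat \<Rightarrow> mseries" where
  "mvar j = Abs_mseries (sf_var j)"

definition mmonom :: "nat multiset \<Rightarrow> mseries" where
  "mmonom N = (\<Prod>j\<in>#N. mvar j)"

definition mconst :: "rat \<Rightarrow> mseries" where
  "mconst q = Abs_mseries (\<lambda>M. if M = {#} then q else 0)"

lemma mcoeff_mvar: "mcoeff (mvar j) M = (if M = {#j#} then 1 else 0)"
  by (simp add: mvar_def sf_var_def)

lemma mcoeff_mvar_mult: "mcoeff (mvar j * f) M = (if j \<in># M then mcoeff f (M - {#j#}) else 0)"
proof -
  have "mcoeff (mvar j * f) M = (\<Sum>A\<in>{A. A \<subseteq># M}. if A = {#j#} then mcoeff f (M - A) else 0)"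
    unfolding mcoeff_mult mcoeff_mvar by (rule sum.cong) auto
  then show ?thesis
    by simp
qed

lemma mcoeff_mmonom_mult:
  "mcoeff (mmonom N * f) M = (if N \<subseteq># M then mcoeff f (M - N) else 0)"
proof (induction N arbitrary: M)
  case empty
  then show ?case by (simp add: mmonom_def)
next
  case (add j N)
  have "mcoeff (mmonom (add_mset j N) * f) M = mcoeff (mvar j * (mmonom N * f)) M"
    by (simp add: mmonom_def mult.assoc)
  also have "\<dots> = (if add_mset j N \<subseteq># M then mcoeff f (M - add_mset j N) else 0)"
    by (auto simp: mcoeff_mvar_mult add.IH insert_subset_eq_iff)
  finally show ?case .
qed

lemma mcoeff_mmonom: "mcoeff (mmonom N) M = (if M = N then 1 else 0)"
  using mcoeff_mmonom_mult[of N 1 M] by (auto simp: mcoeff_1 subset_mset.le_iff_add)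

lemma mvar_power: "mvar j ^ k = mmonom (replicate_mset k j)"
  by (simp add: mmonom_def)

lemma mcoeff_mvar_power: "mcoeff (mvar j ^ k) M = (if M = replicate_mset k j then 1 else 0)"
  by (simp add: mvar_power mcoeff_mmonom)

lemma mcoeff_mconst: "mcoeff (mconst q) M = (if M = {#} then q else 0)"
  by (simp add: mconst_def)

lemma mcoeff_mconst_mult: "mcoeff (mconst q * f) M = q * mcoeff f M"
  by (simp add: mcoeff_mult mcoeff_mconst sum_msubsets_empty)

lemma mconst_0 [simp]: "mconst 0 = 0"
  by (rule mseries_eqI) (simp add: mcoeff_mconst)

lemma mconst_1 [simp]: "mconst 1 = 1"
  by (rule mseries_eqI) (simp add: mcoeff_mconst mcoeff_1)

lemma mconst_mult: "mconst p * mconst q = mconst (p * q)"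
  by (rule mseries_eqI) (simp add: mcoeff_mconst_mult mcoeff_mconst)

lemma mconst_add: "mconst p + mconst q = mconst (p + q)"
  by (rule mseries_eqI) (simp add: mcoeff_mconst)

lemma mconst_power: "mconst q ^ k = mconst (q ^ k)"
  by (induction k) (auto simp: mconst_mult)

lemma of_nat_eq_mconst: "of_nat n = mconst (of_nat n)"
  by (induction n) (auto simp: mconst_add[symmetric])

lemma minus_one_power_eq_mconst: "(-1 :: mseries) ^ k = mconst ((-1) ^ k)"
proof -
  have "(-1 :: mseries) = mconst (-1)"
    by (rule mseries_eqI) (simp add: mcoeff_mconst mcoeff_1)
  then show ?thesis
    by (simp add: mconst_power)
qed


section \<open>The weight filtration\<close>

definition vanishes_below :: "nat \<Rightarrow> mseries \<Rightarrow> bool" where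
  "vanishes_below d f \<longleftrightarrow> (\<forall>M. wt M < d \<longrightarrow> mcoeff f M = 0)"

lemma vanishes_belowD: "vanishes_below d f \<Longrightarrow> wt M < d \<Longrightarrow> mcoeff f M = 0"
  by (simp add: vanishes_below_def)

lemma zero_vanishes_below [simp]: "vanishes_below d 0"
  by (simp add: vanishes_below_def)

lemma vanishes_below_0 [simp]: "vanishes_below 0 f"
  by (simp add: vanishes_below_def)

lemma vanishes_below_mono: "vanishes_below d f \<Longrightarrow> e \<le> d \<Longrightarrow> vanishes_below e f"
  by (simp add: vanishes_below_def)

lemma vanishes_below_add: "vanishes_below d f \<Longrightarrow> vanishes_below d g \<Longrightarrow> vanishes_below d (f + g)"
  by (simp add: vanishes_below_def)

lemma vanishes_below_uminus: "vanishes_below d f \<Longrightarrow> vanishes_below d (- f)"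
  by (simp add: vanishes_below_def)

lemma vanishes_below_sum:
  "(\<And>i. i \<in> A \<Longrightarrow> vanishes_below d (F i)) \<Longrightarrow> vanishes_below d (sum F A)"
  by (simp add: vanishes_below_def mcoeff_sum)

lemma vanishes_below_mconst_mult: "vanishes_below d f \<Longrightarrow> vanishes_below d (mconst q * f)"
  by (simp add: vanishes_below_def mcoeff_mconst_mult)

lemma vanishes_below_mult:
  assumes f: "vanishes_below a f" and g: "vanishes_below b g"
  shows "vanishes_below (a + b) (f * g)"
  unfolding vanishes_below_def
proof (intro allI impI)
  fix M assume M: "wt M < a + b"
  have "mcoeff f A * mcoeff g (M - A) = 0" if "A \<subseteq># M" for A
  proof -
    have "wt A + wt (M - A) = wt M"
      using that by (simp add: wt_diff wt_mono)
    then have "wt A < a \<or> wt (M - A) < b"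
      using M by linarith
    then show ?thesis
      using f g by (auto simp: vanishes_belowD)
  qed
  then show "mcoeff (f * g) M = 0"
    unfolding mcoeff_mult by (intro sum.neutral) auto
qed

lemma vanishes_below_mult_left: "vanishes_below a f \<Longrightarrow> vanishes_below a (f * g)"
  using vanishes_below_mult[of a f 0 g] by simp

lemma vanishes_below_mult_right: "vanishes_below b g \<Longrightarrow> vanishes_below b (f * g)"
  using vanishes_below_mult[of 0 f b g] by simp

lemma vanishes_below_power: "vanishes_below d f \<Longrightarrow> vanishes_below (k * d) (f ^ k)"
  by (induction k) (auto intro: vanishes_below_mult)

lemma vanishes_below_mvar: "vanishes_below (max j 1) (mvar j)"
  by (auto simp: vanishes_below_def mcoeff_mvar)

lemma vanishes_below_mvar_pos: "0 < j \<Longrightarrow> vanishes_below 1 (mvar j)"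
  by (rule vanishes_below_mono[OF vanishes_below_mvar]) simp

lemma vanishes_below_mvar_power: "vanishes_below k (mvar 0 ^ k)"
  using vanishes_below_power[OF vanishes_below_mvar, of k 0] by simp

definition eq_upto :: "nat \<Rightarrow> mseries \<Rightarrow> mseries \<Rightarrow> bool" where
  "eq_upto w f g \<longleftrightarrow> vanishes_below (Suc w) (f - g)"

lemma eq_uptoD: "eq_upto w f g \<Longrightarrow> wt M \<le> w \<Longrightarrow> mcoeff f M = mcoeff g M"
  by (auto simp: eq_upto_def vanishes_below_def)

lemma eq_uptoI: "(\<And>M. wt M \<le> w \<Longrightarrow> mcoeff f M = mcoeff g M) \<Longrightarrow> eq_upto w f g"
  by (auto simp: eq_upto_def vanishes_below_def)

lemma eq_upto_refl [simp]: "eq_upto w f f"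
  by (simp add: eq_upto_def)

lemma eq_upto_sym: "eq_upto w f g \<Longrightarrow> eq_upto w g f"
  by (auto simp: eq_upto_def vanishes_below_def)

lemma eq_upto_trans: "eq_upto w f g \<Longrightarrow> eq_upto w g h \<Longrightarrow> eq_upto w f h"
  by (auto simp: eq_upto_def vanishes_below_def)

lemma eq_upto_add: "eq_upto w f f' \<Longrightarrow> eq_upto w g g' \<Longrightarrow> eq_upto w (f + g) (f' + g')"
  by (auto simp: eq_upto_def vanishes_below_def)

lemma eq_upto_mult:
  assumes "eq_upto w f f'" "eq_upto w g g'"
  shows "eq_upto w (f * g) (f' * g')"
proof -
  have "f * g - f' * g' = (f - f') * g + f' * (g - g')"
    by (simp add: algebra_simps)
  then show ?thesis
    using assms unfolding eq_upto_def
    by (simp add: vanishes_below_add vanishes_below_mult_left vanishes_below_mult_right)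
qed

lemma eq_upto_power: "eq_upto w f g \<Longrightarrow> eq_upto w (f ^ k) (g ^ k)"
  by (induction k) (auto intro: eq_upto_mult)

lemma eq_upto_sum:
  "(\<And>i. i \<in> A \<Longrightarrow> eq_upto w (F i) (G i)) \<Longrightarrow> eq_upto w (sum F A) (sum G A)"
  by (auto simp: eq_upto_def vanishes_below_def mcoeff_sum intro!: sum.cong)

lemma mseries_eq_if_eq_upto: "(\<And>w. eq_upto w f g) \<Longrightarrow> f = g"
  by (rule mseries_eqI) (auto intro: eq_uptoD)


section \<open>Substitution homomorphisms\<close>

definition msubst :: "(nat \<Rightarrow> mseries) \<Rightarrow> mseries \<Rightarrow> mseries" where
  "msubst \<sigma> f = Abs_mseries (subst (\<lambda>i. mcoeff (\<sigma> i)) (mcoeff f))"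

text \<open>
  \<^const>\<open>subst\<close> truncates at the weight of the target monomial. This is exact, and makes
  \<^const>\<open>msubst\<close> a ring homomorphism, once every variable is sent to a series vanishing below its
  own weight: such \<open>\<sigma>\<close> are called admissible.
\<close>

definition raises_wt :: "nat \<Rightarrow> (nat \<Rightarrow> mseries) \<Rightarrow> bool" where
  "raises_wt c \<sigma> \<longleftrightarrow> (\<forall>i. vanishes_below (c * max i 1) (\<sigma> i))"

abbreviation admissible :: "(nat \<Rightarrow> mseries) \<Rightarrow> bool" where
  "admissible \<equiv> raises_wt 1"

lemma monprod_eq_mcoeff_prod: "monprod (\<lambda>i. mcoeff (\<sigma> i)) M = mcoeff (\<Prod>i\<in>#M. \<sigma> i)"
proof -
  have "foldr sf_mult (map (\<lambda>i. mcoeff (\<sigma> i)) xs) sf_one = mcoeff (\<Prod>i\<leftarrow>xs. \<sigma> i)" for xs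
    by (induction xs) (simp_all add: one_mseries_def times_mseries_def)
  then show ?thesis
    by (simp add: monprod_def flip: prod_mset_prod_list)
qed

lemma mcoeff_msubst:
  "mcoeff (msubst \<sigma> f) M' = (\<Sum>M\<in>{M. wt M \<le> wt M'}. mcoeff f M * mcoeff (\<Prod>i\<in>#M. \<sigma> i) M')"
  by (simp add: msubst_def subst_def monprod_eq_mcoeff_prod)

lemma vanishes_below_prod_mset:
  "raises_wt c \<sigma> \<Longrightarrow> vanishes_below (c * wt M) (\<Prod>i\<in>#M. \<sigma> i)"
proof (induction M)
  case (add i M)
  then have "vanishes_below (c * max i 1 + c * wt M) (\<sigma> i * (\<Prod>i\<in>#M. \<sigma> i))"
    by (intro vanishes_below_mult) (auto simp: raises_wt_def)
  then show ?case
    by (simp add: algebra_simps)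
qed simp

lemma mcoeff_prod_mset_eq_0:
  "admissible \<sigma> \<Longrightarrow> wt M' < wt M \<Longrightarrow> mcoeff (\<Prod>i\<in>#M. \<sigma> i) M' = 0"
  using vanishes_below_prod_mset[of 1 \<sigma> M] by (simp add: vanishes_belowD)

lemma mcoeff_msubst_superset:
  assumes "admissible \<sigma>" "finite W" "{M. wt M \<le> wt M'} \<subseteq> W"
  shows "mcoeff (msubst \<sigma> f) M' = (\<Sum>M\<in>W. mcoeff f M * mcoeff (\<Prod>i\<in>#M. \<sigma> i) M')"
  unfolding mcoeff_msubst
  by (rule sum.mono_neutral_left) (use assms mcoeff_prod_mset_eq_0 in auto)

lemma vanishes_below_msubst:
  assumes "raises_wt c \<sigma>" "vanishes_below d f"
  shows "vanishes_below (c * d) (msubst \<sigma> f)"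
  unfolding vanishes_below_def
proof (intro allI impI)
  fix M' assume M': "wt M' < c * d"
  have "mcoeff f M * mcoeff (\<Prod>i\<in>#M. \<sigma> i) M' = 0" for M
  proof (cases "wt M < d")
    case False
    then have "wt M' < c * wt M"
      using M' mult_le_mono2[of d "wt M" c] by linarith
    then show ?thesis
      using vanishes_below_prod_mset[OF assms(1), of M] by (simp add: vanishes_belowD)
  qed (use assms(2) in \<open>simp add: vanishes_belowD\<close>)
  then show "mcoeff (msubst \<sigma> f) M' = 0"
    unfolding mcoeff_msubst by (intro sum.neutral) auto
qed

lemma raises_wt_mono: "raises_wt c \<sigma> \<Longrightarrow> c' \<le> c \<Longrightarrow> raises_wt c' \<sigma>"
  by (auto simp: raises_wt_def intro: vanishes_below_mono)

lemma msubst_add: "msubst \<sigma> (f + g) = msubst \<sigma> f + msubst \<sigma> g"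
  by (rule mseries_eqI) (simp add: mcoeff_msubst sum.distrib distrib_right)

lemma msubst_diff: "msubst \<sigma> (f - g) = msubst \<sigma> f - msubst \<sigma> g"
  by (rule mseries_eqI) (simp add: mcoeff_msubst sum_subtractf left_diff_distrib)

lemma msubst_0 [simp]: "msubst \<sigma> 0 = 0"
  by (rule mseries_eqI) (simp add: mcoeff_msubst)

lemma msubst_sum: "msubst \<sigma> (sum F A) = (\<Sum>i\<in>A. msubst \<sigma> (F i))"
  by (induction A rule: infinite_finite_induct) (auto simp: msubst_add)

lemma msubst_mconst_mult: "msubst \<sigma> (mconst q * f) = mconst q * msubst \<sigma> f"
  by (rule mseries_eqI) (simp add: mcoeff_msubst mcoeff_mconst_mult sum_distrib_left mult.assoc)

lemma msubst_1 [simp]: "msubst \<sigma> 1 = 1"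
proof (rule mseries_eqI)
  fix M'
  have "mcoeff (msubst \<sigma> 1) M' =
          (\<Sum>M\<in>{M. wt M \<le> wt M'}. if M = {#} then mcoeff (\<Prod>i\<in>#M. \<sigma> i) M' else 0)"
    unfolding mcoeff_msubst by (rule sum.cong) (auto simp: mcoeff_1)
  then show "mcoeff (msubst \<sigma> 1) M' = mcoeff 1 M'"
    by (simp add: finite_wt_le mcoeff_1)
qed

lemma msubst_mvar: "admissible \<sigma> \<Longrightarrow> msubst \<sigma> (mvar j) = \<sigma> j"
proof (rule mseries_eqI)
  fix M' assume "admissible \<sigma>"
  have "mcoeff (msubst \<sigma> (mvar j)) M' =
          (\<Sum>M\<in>{M. wt M \<le> wt M'}. if M = {#j#} then mcoeff (\<sigma> j) M' else 0)"
    unfolding mcoeff_msubst by (rule sum.cong) (auto simp: mcoeff_mvar)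
  then show "mcoeff (msubst \<sigma> (mvar j)) M' = mcoeff (\<sigma> j) M'"
    using \<open>admissible \<sigma>\<close> by (auto simp: finite_wt_le raises_wt_def vanishes_below_def)
qed

lemma mcoeff_msubst_mult:
  fixes M' :: "nat multiset"
  assumes "admissible \<sigma>"
  defines "W \<equiv> {M. wt M \<le> wt M'}"
  shows "mcoeff (msubst \<sigma> (f * g)) M' =
           (\<Sum>A\<in>W. \<Sum>B\<in>W. mcoeff f A * mcoeff g B * mcoeff (\<Prod>i\<in>#A + B. \<sigma> i) M')"
proof -
  let ?t = "\<lambda>A B. mcoeff f A * mcoeff g B * mcoeff (\<Prod>i\<in>#A + B. \<sigma> i) M'"
  have finW: "finite W"
    by (simp add: W_def finite_wt_le)
  have "mcoeff (msubst \<sigma> (f * g)) M' = (\<Sum>N\<in>W. \<Sum>A\<in>{A. A \<subseteq># N}. ?t A (N - A))"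
    by (simp add: mcoeff_msubst mcoeff_mult sum_distrib_right W_def)
  also have "\<dots> = (\<Sum>(N,A)\<in>Sigma W (\<lambda>N. {A. A \<subseteq># N}). ?t A (N - A))"
    by (rule sum.Sigma) (auto simp: finW)
  also have "\<dots> = (\<Sum>(A,B)\<in>{(A,B). A \<in> W \<and> B \<in> W \<and> wt (A + B) \<le> wt M'}. ?t A B)"
  proof (rule sum.reindex_bij_witness[where j = "\<lambda>(N,A). (A, N - A)" and i = "\<lambda>(A,B). (A + B, A)"])
    fix a assume "a \<in> Sigma W (\<lambda>N. {A. A \<subseteq># N})"
    then obtain N A where a: "a = (N,A)" "N \<in> W" "A \<subseteq># N" by auto
    have "wt A \<le> wt N" "wt (N - A) \<le> wt N" "wt A + wt (N - A) = wt N"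
      using a wt_mono[of A N] wt_mono[of "N - A" N] wt_diff[of A N] by auto
    then show "(case case a of (N, A) \<Rightarrow> (A, N - A) of (A, B) \<Rightarrow> (A + B, A)) = a"
         "(case a of (N, A) \<Rightarrow> (A, N - A)) \<in> {(A, B). A \<in> W \<and> B \<in> W \<and> wt (A + B) \<le> wt M'}"
         "(case case a of (N, A) \<Rightarrow> (A, N - A) of (A, B) \<Rightarrow> ?t A B) =
          (case a of (N, A) \<Rightarrow> ?t A (N - A))"
      using a by (auto simp: W_def)
  next
    fix b assume "b \<in> {(A, B). A \<in> W \<and> B \<in> W \<and> wt (A + B) \<le> wt M'}"
    then obtain A B where b: "b = (A,B)" "wt (A + B) \<le> wt M'" by auto
    then show "(case case b of (A, B) \<Rightarrow> (A + B, A) of (N, A) \<Rightarrow> (A, N - A)) = b"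
         "(case b of (A, B) \<Rightarrow> (A + B, A)) \<in> Sigma W (\<lambda>N. {A. A \<subseteq># N})"
      by (auto simp: W_def)
  qed
  also have "\<dots> = (\<Sum>(A,B)\<in>W \<times> W. ?t A B)"
  proof -
    have "wt (A + B) \<le> wt M'" if "mcoeff (\<Prod>i\<in>#A + B. \<sigma> i) M' \<noteq> 0" for A B
      using mcoeff_prod_mset_eq_0[OF assms(1), of M' "A + B"] that by linarith
    then show ?thesis
      by (intro sum.mono_neutral_left) (use finW in auto)
  qed
  finally show ?thesis
    by (simp add: sum.cartesian_product)
qed

lemma mcoeff_mult_msubst:
  fixes M' :: "nat multiset"
  assumes "admissible \<sigma>"
  defines "W \<equiv> {M. wt M \<le> wt M'}"
  shows "mcoeff (msubst \<sigma> f * msubst \<sigma> g) M' =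
           (\<Sum>A\<in>W. \<Sum>B\<in>W. mcoeff f A * mcoeff g B * mcoeff (\<Prod>i\<in>#A + B. \<sigma> i) M')"
proof -
  have finW: "finite W"
    by (simp add: W_def finite_wt_le)
  have sub: "{M. wt M \<le> wt C} \<subseteq> W" "{M. wt M \<le> wt (M' - C)} \<subseteq> W" if "C \<subseteq># M'" for C
    using that wt_mono[of C M'] wt_mono[of "M' - C" M'] by (auto simp: W_def)
  have "mcoeff (msubst \<sigma> f * msubst \<sigma> g) M' =
          (\<Sum>C\<in>{C. C \<subseteq># M'}. (\<Sum>A\<in>W. mcoeff f A * mcoeff (\<Prod>i\<in>#A. \<sigma> i) C) *
                                (\<Sum>B\<in>W. mcoeff g B * mcoeff (\<Prod>i\<in>#B. \<sigma> i) (M' - C)))"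
    unfolding mcoeff_mult
    by (rule sum.cong[OF refl]) (use mcoeff_msubst_superset[OF assms(1) finW] sub in auto)
  also have "\<dots> = (\<Sum>A\<in>W. \<Sum>B\<in>W. \<Sum>C\<in>{C. C \<subseteq># M'}. mcoeff f A * mcoeff g B *
                     (mcoeff (\<Prod>i\<in>#A. \<sigma> i) C * mcoeff (\<Prod>i\<in>#B. \<sigma> i) (M' - C)))"
    by (simp add: sum_product ac_simps) (subst sum.swap, rule sum.cong[OF refl], rule sum.swap)
  finally show ?thesis
    by (simp add: mcoeff_mult sum_distrib_left)
qed

lemma msubst_mult: "admissible \<sigma> \<Longrightarrow> msubst \<sigma> (f * g) = msubst \<sigma> f * msubst \<sigma> g"
  by (rule mseries_eqI) (simp add: mcoeff_msubst_mult mcoeff_mult_msubst)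

lemma msubst_power: "admissible \<sigma> \<Longrightarrow> msubst \<sigma> (f ^ k) = msubst \<sigma> f ^ k"
  by (induction k) (auto simp: msubst_mult)

lemma msubst_prod_mset:
  "admissible \<sigma> \<Longrightarrow> msubst \<sigma> (\<Prod>i\<in>#M. \<tau> i) = (\<Prod>i\<in>#M. msubst \<sigma> (\<tau> i))"
  by (induction M) (auto simp: msubst_mult)

lemma msubst_msubst:
  assumes \<sigma>: "admissible \<sigma>" and \<tau>: "admissible \<tau>"
  shows "msubst \<sigma> (msubst \<tau> f) = msubst (\<lambda>i. msubst \<sigma> (\<tau> i)) f"
proof (rule mseries_eqI)
  fix M''
  define W where "W = {M. wt M \<le> wt M''}"
  have finW: "finite W"
    by (simp add: W_def finite_wt_le)
  have "mcoeff (msubst \<sigma> (msubst \<tau> f)) M'' =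
          (\<Sum>N\<in>W. (\<Sum>M\<in>W. mcoeff f M * mcoeff (\<Prod>i\<in>#M. \<tau> i) N) * mcoeff (\<Prod>i\<in>#N. \<sigma> i) M'')"
    unfolding mcoeff_msubst[of \<sigma>] W_def[symmetric]
    by (rule sum.cong[OF refl], subst mcoeff_msubst_superset[OF \<tau> finW]) (auto simp: W_def)
  also have "\<dots> = (\<Sum>M\<in>W. mcoeff f M * (\<Sum>N\<in>W. mcoeff (\<Prod>i\<in>#M. \<tau> i) N * mcoeff (\<Prod>i\<in>#N. \<sigma> i) M''))"
    by (simp add: sum_distrib_left sum_distrib_right mult.assoc) (rule sum.swap)
  also have "\<dots> = mcoeff (msubst (\<lambda>i. msubst \<sigma> (\<tau> i)) f) M''"
    by (simp add: mcoeff_msubst W_def flip: msubst_prod_mset[OF \<sigma>])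
  finally show "mcoeff (msubst \<sigma> (msubst \<tau> f)) M'' = mcoeff (msubst (\<lambda>i. msubst \<sigma> (\<tau> i)) f) M''" .
qed

lemma raises_wt_msubst_comp:
  "admissible \<sigma> \<Longrightarrow> raises_wt c \<tau> \<Longrightarrow> raises_wt c (\<lambda>i. msubst \<sigma> (\<tau> i))"
  using vanishes_below_msubst[of 1 \<sigma>] by (auto simp: raises_wt_def)

lemma msubst_msubst_msubst:
  assumes "admissible \<sigma>" "admissible \<tau>" "admissible \<rho>"
  shows "msubst \<sigma> (msubst \<tau> (msubst \<rho> f)) = msubst (\<lambda>i. msubst \<sigma> (msubst \<tau> (\<rho> i))) f"
  by (simp only: msubst_msubst[OF assms(2,3)]
                 msubst_msubst[OF assms(1) raises_wt_msubst_comp[OF assms(2,3)]])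

lemma msubst_mvar_id: "msubst mvar f = f"
proof (rule mseries_eqI)
  fix M'
  have "mcoeff (msubst mvar f) M' = (\<Sum>M\<in>{M. wt M \<le> wt M'}. if M = M' then mcoeff f M else 0)"
    unfolding mcoeff_msubst by (rule sum.cong) (auto simp: mcoeff_mmonom[unfolded mmonom_def])
  then show "mcoeff (msubst mvar f) M' = mcoeff f M'"
    by (simp add: finite_wt_le)
qed

lemma msubst_eq_upto: "eq_upto w f g \<Longrightarrow> eq_upto w (msubst \<sigma> f) (msubst \<sigma> g)"
  by (rule eq_uptoI) (auto simp: mcoeff_msubst eq_uptoD intro!: sum.cong)


section \<open>Univariate power series in \<open>p\<^sub>1\<close> and their composition\<close>

lemma set_mset_subset_singleton_iff: "set_mset M \<subseteq> {v} \<longleftrightarrow> M = replicate_mset (size M) v"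
  by (metis set_mset_replicate_mset_subset set_mset_subset_singletonD subset_refl empty_subsetI)

lemma msubsets_replicate_mset:
  "{A. A \<subseteq># replicate_mset n v} = (\<lambda>k. replicate_mset k v) ` {0..n}"
  by (auto simp: replicate_mset_msubseteq_iff elim: msubseteq_replicate_msetE)

lemma inj_on_replicate_mset: "inj_on (\<lambda>k. replicate_mset k v) A"
  by (rule inj_onI) (metis size_replicate_mset)

definition of_fps :: "rat fps \<Rightarrow> mseries" where
  "of_fps F = Abs_mseries (\<lambda>M. if set_mset M \<subseteq> {1} then F $ size M else 0)"

lemma mcoeff_of_fps: "mcoeff (of_fps F) M = (if set_mset M \<subseteq> {1} then F $ size M else 0)"
  by (simp add: of_fps_def)

lemma of_fps_add: "of_fps (F + G) = of_fps F + of_fps G"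
  by (rule mseries_eqI) (simp add: mcoeff_of_fps)

lemma of_fps_1: "of_fps 1 = 1"
  by (rule mseries_eqI) (auto simp: mcoeff_of_fps mcoeff_1)

lemma of_fps_X: "of_fps fps_X = mvar 1"
proof (rule mseries_eqI)
  fix M
  show "mcoeff (of_fps fps_X) M = mcoeff (mvar 1) M"
  proof (cases "set_mset M \<subseteq> {1}")
    case True
    then have "M = replicate_mset (size M) 1"
      by (simp add: set_mset_subset_singleton_iff)
    with True show ?thesis
      by (auto simp: mcoeff_of_fps mcoeff_mvar fps_X_def)
  qed (auto simp: mcoeff_of_fps mcoeff_mvar)
qed

lemma of_fps_mult: "of_fps (F * G) = of_fps F * of_fps G"
proof (rule mseries_eqI)
  fix M
  show "mcoeff (of_fps (F * G)) M = mcoeff (of_fps F * of_fps G) M"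
  proof (cases "set_mset M \<subseteq> {1}")
    case True
    define n where "n = size M"
    have M: "M = replicate_mset n 1"
      using True by (simp add: set_mset_subset_singleton_iff n_def)
    have "mcoeff (of_fps F * of_fps G) M =
            (\<Sum>k\<in>{0..n}. mcoeff (of_fps F) (replicate_mset k 1) * mcoeff (of_fps G) (M - replicate_mset k 1))"
      by (simp add: mcoeff_mult M msubsets_replicate_mset sum.reindex inj_on_replicate_mset)
    also have "\<dots> = (\<Sum>k\<in>{0..n}. F $ k * G $ (n - k))"
    proof (intro sum.cong refl)
      fix k assume "k \<in> {0..n}"
      then have "M - replicate_mset k 1 = replicate_mset (n - k) 1"
        by (simp add: M multiset_eq_iff)
      then show "mcoeff (of_fps F) (replicate_mset k 1) * mcoeff (of_fps G) (M - replicate_mset k 1) =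
                 F $ k * G $ (n - k)"
        by (simp add: mcoeff_of_fps)
    qed
    finally show ?thesis
      using True by (simp add: mcoeff_of_fps fps_mult_nth n_def)
  next
    case False
    have "\<not> (set_mset A \<subseteq> {1} \<and> set_mset (M - A) \<subseteq> {1})" if "A \<subseteq># M" for A
      using False that by (metis set_mset_union subset_mset.add_diff_inverse Un_least)
    then have "mcoeff (of_fps F * of_fps G) M = 0"
      unfolding mcoeff_mult by (intro sum.neutral) (auto simp: mcoeff_of_fps)
    then show ?thesis
      using False by (simp add: mcoeff_of_fps)
  qed
qed

lemma of_fps_power: "of_fps (F ^ k) = of_fps F ^ k"
  by (induction k) (auto simp: of_fps_1 of_fps_mult)

lemma vanishes_below_of_fps: "F $ 0 = 0 \<Longrightarrow> vanishes_below 1 (of_fps F)"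
  by (auto simp: vanishes_below_def mcoeff_of_fps wt_eq_0_iff)

definition p1_subst :: "mseries \<Rightarrow> nat \<Rightarrow> mseries" where
  "p1_subst g = (\<lambda>j. if j = 1 then g else 0)"

lemma admissible_p1_subst: "vanishes_below 1 g \<Longrightarrow> admissible (p1_subst g)"
  by (auto simp: raises_wt_def p1_subst_def)

definition fps_at :: "rat fps \<Rightarrow> mseries \<Rightarrow> mseries" where
  "fps_at F g = msubst (p1_subst g) (of_fps F)"

lemma mcoeff_fps_at:
  assumes "vanishes_below 1 g"
  shows "mcoeff (fps_at F g) M' = (\<Sum>k\<le>wt M'. F $ k * mcoeff (g ^ k) M')"
proof -
  define w where "w = wt M'"
  let ?t = "\<lambda>M. mcoeff (of_fps F) M * mcoeff (\<Prod>i\<in>#M. p1_subst g i) M'"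
  have "mcoeff (fps_at F g) M' = (\<Sum>M\<in>{M. wt M \<le> w}. ?t M)"
    by (simp add: fps_at_def mcoeff_msubst w_def)
  also have "\<dots> = (\<Sum>M\<in>(\<lambda>k. replicate_mset k 1) ` {..w}. ?t M)"
  proof (rule sum.mono_neutral_right)
    show "finite {M. wt M \<le> w}"
      by (rule finite_wt_le)
    show "(\<lambda>k. replicate_mset k 1) ` {..w} \<subseteq> {M. wt M \<le> w}"
      by auto
    show "\<forall>M\<in>{M. wt M \<le> w} - (\<lambda>k. replicate_mset k 1) ` {..w}. ?t M = 0"
    proof
      fix M assume M: "M \<in> {M. wt M \<le> w} - (\<lambda>k. replicate_mset k 1) ` {..w}"
      show "?t M = 0"
      proof (cases "set_mset M \<subseteq> {1}")
        case True
        then have "M = replicate_mset (size M) 1"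
          by (simp add: set_mset_subset_singleton_iff)
        moreover have "size M \<le> w"
          using M size_le_wt[of M] by auto
        ultimately show ?thesis
          using M by (metis atMost_iff image_eqI DiffD2)
      qed (simp add: mcoeff_of_fps)
    qed
  qed
  also have "\<dots> = (\<Sum>k\<le>w. ?t (replicate_mset k 1))"
    by (subst sum.reindex) (auto simp: inj_on_replicate_mset)
  also have "\<dots> = (\<Sum>k\<le>w. F $ k * mcoeff (g ^ k) M')"
    by (intro sum.cong refl) (auto simp: mcoeff_of_fps p1_subst_def)
  finally show ?thesis
    by (simp add: w_def)
qed

lemma of_fps_compose:
  assumes "G $ 0 = 0"
  shows "of_fps (F oo G) = fps_at F (of_fps G)"
proof (rule mseries_eqI)
  fix M
  have "mcoeff (fps_at F (of_fps G)) M = (\<Sum>k\<le>wt M. F $ k * mcoeff (of_fps (G ^ k)) M)"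
    by (simp add: mcoeff_fps_at[OF vanishes_below_of_fps[OF assms]] of_fps_power)
  also have "\<dots> = mcoeff (of_fps (F oo G)) M"
  proof (cases "set_mset M \<subseteq> {1}")
    case True
    then have "wt M = size M"
      by (metis set_mset_subset_singleton_iff wt_replicate_mset max_def mult.right_neutral le_refl)
    with True show ?thesis
      by (simp add: mcoeff_of_fps fps_compose_nth atLeast0AtMost)
  qed (simp add: mcoeff_of_fps)
  finally show "mcoeff (of_fps (F oo G)) M = mcoeff (fps_at F (of_fps G)) M"
    by simp
qed

lemma msubst_fps_at:
  assumes "admissible \<sigma>" "vanishes_below 1 g"
  shows "msubst \<sigma> (fps_at F g) = fps_at F (msubst \<sigma> g)"
proof -
  have "(\<lambda>i. msubst \<sigma> (p1_subst g i)) = p1_subst (msubst \<sigma> g)"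
    by (auto simp: p1_subst_def)
  then show ?thesis
    unfolding fps_at_def by (simp add: msubst_msubst[OF assms(1) admissible_p1_subst[OF assms(2)]])
qed

lemma fps_at_compose:
  assumes "vanishes_below 1 g" "G $ 0 = 0"
  shows "fps_at (F oo G) g = fps_at F (fps_at G g)"
proof -
  have "fps_at (F oo G) g = msubst (p1_subst g) (fps_at F (of_fps G))"
    by (simp add: fps_at_def of_fps_compose[OF assms(2)])
  also have "\<dots> = fps_at F (msubst (p1_subst g) (of_fps G))"
    by (rule msubst_fps_at[OF admissible_p1_subst[OF assms(1)] vanishes_below_of_fps[OF assms(2)]])
  finally show ?thesis
    by (simp add: fps_at_def)
qed

lemma fps_at_1_plus_X:
  assumes "vanishes_below 1 g"
  shows "fps_at (1 + fps_X) g = 1 + g"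
  using msubst_mvar[OF admissible_p1_subst[OF assms], of 1]
  by (simp add: fps_at_def of_fps_add of_fps_1 of_fps_X msubst_add) (simp add: p1_subst_def)

lemma vanishes_below_fps_at:
  assumes "vanishes_below 1 g" "F $ 0 = 0"
  shows "vanishes_below 1 (fps_at F g)"
  using vanishes_below_msubst[OF admissible_p1_subst[OF assms(1)] vanishes_below_of_fps[OF assms(2)]]
  by (simp add: fps_at_def)


lemma fps_exp_compose_ln: "fps_exp (1::rat) oo fps_ln 1 = 1 + fps_X"
proof -
  have "(fps_exp (1::rat) - 1) oo fps_ln 1 = fps_X"
    by (simp add: fps_ln_fps_exp_inv fps_inv_right)
  then have "(fps_exp (1::rat) oo fps_ln 1) - 1 = fps_X"
    by (simp add: fps_compose_sub_distrib)
  then show ?thesis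
    by (metis add.commute diff_eq_eq)
qed

definition mexp :: "mseries \<Rightarrow> mseries" where
  "mexp h = fps_at (fps_exp 1) h"

lemma mcoeff_mexp: "vanishes_below 1 h \<Longrightarrow> mcoeff (mexp h) M = (\<Sum>k\<le>wt M. mcoeff (h ^ k) M / fact k)"
  by (simp add: mexp_def mcoeff_fps_at fps_exp_def)

lemma mexp_fps_at_ln: "vanishes_below 1 g \<Longrightarrow> mexp (fps_at (fps_ln 1) g) = 1 + g"
  by (simp add: mexp_def fps_exp_compose_ln fps_at_1_plus_X flip: fps_at_compose)

lemma msubst_mexp: "admissible \<sigma> \<Longrightarrow> vanishes_below 1 h \<Longrightarrow> msubst \<sigma> (mexp h) = mexp (msubst \<sigma> h)"
  by (simp add: mexp_def msubst_fps_at)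

lemma mexp_0: "mexp 0 = 1"
proof (rule mseries_eqI)
  fix M
  have "mcoeff (mexp 0) M = (\<Sum>k\<le>wt M. mcoeff ((0::mseries) ^ k) M / fact k)"
    by (simp add: mcoeff_mexp)
  also have "\<dots> = (\<Sum>k\<le>wt M. if k = 0 then mcoeff 1 M else 0)"
    by (intro sum.cong refl) (auto simp: power_0_left)
  finally show "mcoeff (mexp 0) M = mcoeff 1 M"
    by simp
qed

definition exp_trunc :: "nat \<Rightarrow> mseries \<Rightarrow> mseries" where
  "exp_trunc w h = (\<Sum>k\<le>w. mconst (1 / fact k) * h ^ k)"

lemma mexp_eq_upto_exp_trunc:
  assumes h: "vanishes_below 1 h"
  shows "eq_upto w (mexp h) (exp_trunc w h)"
proof (rule eq_uptoI)
  fix M assume M: "wt M \<le> w"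
  have "mcoeff (h ^ k) M = 0" if "wt M < k" for k
    using vanishes_below_power[OF h, of k] that by (simp add: vanishes_belowD)
  then have "(\<Sum>k\<le>wt M. mcoeff (h ^ k) M / fact k) = (\<Sum>k\<le>w. mcoeff (h ^ k) M / fact k)"
    by (intro sum.mono_neutral_left) (use M in auto)
  then show "mcoeff (mexp h) M = mcoeff (exp_trunc w h) M"
    by (simp add: mcoeff_mexp[OF h] exp_trunc_def mcoeff_sum mcoeff_mconst_mult)
qed

lemma exp_trunc_add:
  "exp_trunc w (a + b) =
     (\<Sum>(r,s)\<in>{(r,s). r + s \<le> w}. mconst (1 / (fact r * fact s)) * a ^ r * b ^ s)"
proof -
  have coeff: "mconst (1 / fact k) * (of_nat (k choose r) * a ^ r * b ^ (k - r)) =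
                 mconst (1 / (fact r * fact (k - r))) * a ^ r * b ^ (k - r)" if "r \<le> k" for k r
  proof -
    have "(1 / fact k) * (of_nat (k choose r) :: rat) = 1 / (fact r * fact (k - r))"
      using that by (simp add: binomial_fact)
    then show ?thesis
      by (simp add: of_nat_eq_mconst mult.assoc[symmetric] mconst_mult)
  qed
  have "exp_trunc w (a + b) =
          (\<Sum>k\<le>w. \<Sum>r\<le>k. mconst (1 / fact k) * (of_nat (k choose r) * a ^ r * b ^ (k - r)))"
    by (simp add: exp_trunc_def binomial_ring sum_distrib_left)
  also have "\<dots> = (\<Sum>k\<le>w. \<Sum>r\<le>k. mconst (1 / (fact r * fact (k - r))) * a ^ r * b ^ (k - r))"
    by (intro sum.cong refl) (simp add: coeff)
  finally show ?thesis
    by (simp add: sum.triangle_reindex_eq)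
qed

lemma exp_trunc_mult:
  assumes a: "vanishes_below 1 a" and b: "vanishes_below 1 b"
  shows "eq_upto w (exp_trunc w a * exp_trunc w b) (exp_trunc w (a + b))"
proof -
  define t where "t r s = mconst (1 / (fact r * fact s)) * a ^ r * b ^ s" for r s
  define high where "high = {(r,s). r \<le> w \<and> s \<le> w \<and> w < r + s}"
  have "exp_trunc w a * exp_trunc w b = (\<Sum>r\<le>w. \<Sum>s\<le>w. t r s)"
    by (simp add: exp_trunc_def t_def sum_product mconst_mult ac_simps)
  also have "\<dots> = (\<Sum>(r,s)\<in>{..w} \<times> {..w}. t r s)"
    by (rule sum.cartesian_product)
  also have "{..w} \<times> {..w} = {(r,s). r + s \<le> w} \<union> high"
    by (auto simp: high_def)
  also have "(\<Sum>(r,s)\<in>\<dots>. t r s) = (\<Sum>(r,s)\<in>{(r,s). r + s \<le> w}. t r s) + (\<Sum>(r,s)\<in>high. t r s)"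
    by (rule sum.union_disjoint)
       (auto simp: high_def intro: finite_subset[of _ "{..w} \<times> {..w}"])
  finally have "exp_trunc w a * exp_trunc w b = exp_trunc w (a + b) + (\<Sum>(r,s)\<in>high. t r s)"
    by (simp add: exp_trunc_add t_def)
  moreover have "vanishes_below (Suc w) (\<Sum>(r,s)\<in>high. t r s)"
  proof (rule vanishes_below_sum, clarify)
    fix r s assume "(r, s) \<in> high"
    moreover have "vanishes_below (r * 1 + s * 1) (t r s)"
      unfolding t_def mult.assoc
      by (intro vanishes_below_mconst_mult vanishes_below_mult vanishes_below_power a b)
    ultimately show "vanishes_below (Suc w) (t r s)"
      by (auto simp: high_def elim: vanishes_below_mono)
  qed
  ultimately show ?thesis
    by (simp add: eq_upto_def)
qed

lemma mexp_add:
  assumes a: "vanishes_below 1 a" and b: "vanishes_below 1 b"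
  shows "mexp (a + b) = mexp a * mexp b"
proof (rule mseries_eq_if_eq_upto)
  fix w
  have "eq_upto w (mexp (a + b)) (exp_trunc w (a + b))"
    by (rule mexp_eq_upto_exp_trunc[OF vanishes_below_add[OF a b]])
  moreover have "eq_upto w (exp_trunc w (a + b)) (exp_trunc w a * exp_trunc w b)"
    by (rule eq_upto_sym[OF exp_trunc_mult[OF a b]])
  moreover have "eq_upto w (exp_trunc w a * exp_trunc w b) (mexp a * mexp b)"
    by (intro eq_upto_mult eq_upto_sym[OF mexp_eq_upto_exp_trunc] a b)
  ultimately show "eq_upto w (mexp (a + b)) (mexp a * mexp b)"
    by (blast intro: eq_upto_trans)
qed

lemma mexp_sum:
  "finite A \<Longrightarrow> (\<And>j. j \<in> A \<Longrightarrow> vanishes_below 1 (F j)) \<Longrightarrow> mexp (sum F A) = (\<Prod>j\<in>A. mexp (F j))"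
  by (induction A rule: finite_induct) (auto simp: mexp_0 mexp_add vanishes_below_sum)

lemma mexp_eq_upto:
  assumes "vanishes_below 1 f" "vanishes_below 1 g" "eq_upto w f g"
  shows "eq_upto w (mexp f) (mexp g)"
proof -
  have "eq_upto w (exp_trunc w f) (exp_trunc w g)"
    unfolding exp_trunc_def by (intro eq_upto_sum eq_upto_mult eq_upto_refl eq_upto_power assms(3))
  then show ?thesis
    by (meson assms(1,2) eq_upto_sym eq_upto_trans mexp_eq_upto_exp_trunc)
qed


section \<open>Cauchy's formula \<open>\<Sum>\<^sub>n h\<^sub>n = exp(\<Sum>\<^sub>j p\<^sub>j/j)\<close>\<close>

definition log_H :: mseries where
  "log_H = Abs_mseries (\<lambda>M. if \<exists>j>0. M = {#j#} then 1 / of_nat (sum_mset M) else 0)"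

definition H_sum :: mseries where
  "H_sum = Abs_mseries (\<lambda>M. if 0 \<in># M then 0 else 1 / zee M)"

definition log_H_trunc :: "nat \<Rightarrow> mseries" where
  "log_H_trunc w = (\<Sum>j\<in>{1..w}. mconst (1 / of_nat j) * mvar j)"

lemma vanishes_below_mconst_mvar: "0 < j \<Longrightarrow> vanishes_below 1 (mconst q * mvar j)"
  by (intro vanishes_below_mconst_mult vanishes_below_mvar_pos)

lemma vanishes_below_log_H: "vanishes_below 1 log_H"
  by (auto simp: vanishes_below_def log_H_def)

lemma vanishes_below_log_H_trunc: "vanishes_below 1 (log_H_trunc w)"
  unfolding log_H_trunc_def by (rule vanishes_below_sum, rule vanishes_below_mconst_mvar) auto

lemma log_H_eq_upto_trunc: "eq_upto w log_H (log_H_trunc w)"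
proof (rule eq_uptoI)
  fix M assume M: "wt M \<le> w"
  have "mcoeff (log_H_trunc w) M = (\<Sum>j\<in>{1..w}. if M = {#j#} then 1 / of_nat j else 0)"
    by (simp add: log_H_trunc_def mcoeff_sum mcoeff_mconst_mult mcoeff_mvar if_distrib cong: if_cong)
  also have "\<dots> = mcoeff log_H M"
  proof (cases "\<exists>j>0. M = {#j#}")
    case True
    then obtain j where "j > 0" "M = {#j#}"
      by auto
    moreover from this have "j \<in> {1..w}"
      using M by auto
    ultimately show ?thesis
      using True by (simp add: log_H_def)
  next
    case False
    have "M \<noteq> {#j#}" if "j \<in> {1..w}" for j
    proof -
      from that have "j > 0"
        by simp
      with False show ?thesis
        by blast
    qed
    moreover have "mcoeff log_H M = 0"
      unfolding log_H_def mcoeff_Abs_mseries by (rule if_not_P[OF False])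
    ultimately show ?thesis
      by simp
  qed
  finally show "mcoeff log_H M = mcoeff (log_H_trunc w) M"
    by simp
qed

lemma mcoeff_mult_separated:
  assumes f: "\<And>N. mcoeff f N \<noteq> 0 \<Longrightarrow> set_mset N \<subseteq> {v}"
      and g: "\<And>N. mcoeff g N \<noteq> 0 \<Longrightarrow> v \<notin># N"
  shows "mcoeff (f * g) M = mcoeff f (filter_mset (\<lambda>j. j = v) M) * mcoeff g (filter_mset (\<lambda>j. j \<noteq> v) M)"
proof -
  let ?A = "filter_mset (\<lambda>j. j = v) M"
  have "mcoeff f A * mcoeff g (M - A) = 0" if "A \<subseteq># M" "A \<noteq> ?A" for A
  proof (rule ccontr)
    assume "mcoeff f A * mcoeff g (M - A) \<noteq> 0"
    then have "set_mset A \<subseteq> {v}" "v \<notin># M - A"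
      using f g by auto
    then have "A = ?A"
      using \<open>A \<subseteq># M\<close> by (auto simp: multiset_eq_iff subseteq_mset_def not_in_iff)
        (metis diff_is_0_eq le_antisym)
    with \<open>A \<noteq> ?A\<close> show False ..
  qed
  then have "mcoeff (f * g) M = (\<Sum>A\<in>{?A}. mcoeff f A * mcoeff g (M - A))"
    unfolding mcoeff_mult by (intro sum.mono_neutral_right) (auto simp: multiset_filter_subset)
  moreover have "M - ?A = filter_mset (\<lambda>j. j \<noteq> v) M"
    by (simp add: multiset_eq_iff)
  ultimately show ?thesis
    by simp
qed

lemma mcoeff_mexp_mvar:
  assumes "0 < j"
  shows "mcoeff (mexp (mconst (1 / of_nat j) * mvar j)) M =
           (if set_mset M \<subseteq> {j} then 1 / of_nat (j ^ size M * fact (size M)) else 0)"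
proof -
  have "mcoeff (mexp (mconst (1 / of_nat j) * mvar j)) M =
          (\<Sum>k\<le>wt M. if M = replicate_mset k j then 1 / of_nat (j ^ k * fact k) else 0)"
    unfolding mcoeff_mexp[OF vanishes_below_mconst_mvar[OF assms]]
    by (intro sum.cong refl)
       (simp add: power_mult_distrib mconst_power mcoeff_mconst_mult mcoeff_mvar_power power_one_over)
  also have "\<dots> = (if set_mset M \<subseteq> {j} then 1 / of_nat (j ^ size M * fact (size M)) else 0)"
  proof (cases "set_mset M \<subseteq> {j}")
    case True
    then have "M = replicate_mset k j \<longleftrightarrow> k = size M" for k
      by (metis set_mset_subset_singleton_iff size_replicate_mset)
    with True show ?thesis
      using size_le_wt[of M] by simp
  next
    case False
    then have "M \<noteq> replicate_mset k j" for k
      by (metis set_mset_subset_singleton_iff size_replicate_mset)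
    with False show ?thesis
      by simp
  qed
  finally show ?thesis .
qed

lemma mcoeff_prod_mexp_mvar:
  assumes "finite A" "0 \<notin> A"
  shows "mcoeff (\<Prod>j\<in>A. mexp (mconst (1 / of_nat j) * mvar j)) M =
           (if set_mset M \<subseteq> A then \<Prod>j\<in>A. 1 / of_nat (j ^ count M j * fact (count M j)) else 0)"
  using assms
proof (induction A arbitrary: M rule: finite_induct)
  case empty
  then show ?case
    by (auto simp: mcoeff_1)
next
  case (insert v A)
  let ?E = "\<lambda>j. mexp (mconst (1 / of_nat j) * mvar j)"
  have IH: "mcoeff (\<Prod>j\<in>A. ?E j) N =
              (if set_mset N \<subseteq> A then \<Prod>j\<in>A. 1 / of_nat (j ^ count N j * fact (count N j)) else 0)" for N
    using insert by auto
  have "mcoeff (?E v * (\<Prod>j\<in>A. ?E j)) M =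
          mcoeff (?E v) (filter_mset (\<lambda>j. j = v) M) * mcoeff (\<Prod>j\<in>A. ?E j) (filter_mset (\<lambda>j. j \<noteq> v) M)"
    using insert by (intro mcoeff_mult_separated) (auto simp: mcoeff_mexp_mvar IH split: if_splits)
  moreover have "size (filter_mset (\<lambda>j. j = v) M) = count M v"
    by (simp add: count_conv_size_mset)
  moreover have "count (filter_mset (\<lambda>j. j \<noteq> v) M) j = count M j" if "j \<in> A" for j
    using insert that by auto
  ultimately show ?case
    using insert by (auto simp: mcoeff_mexp_mvar IH cong: prod.cong)
qed

lemma inverse_zee: "1 / zee M = (\<Prod>j\<in>set_mset M. 1 / of_nat (j ^ count M j * fact (count M j)))"
  using prod_dividef[of "\<lambda>_. 1::rat" "\<lambda>j. of_nat (j ^ count M j * fact (count M j))" "set_mset M"]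
  by (simp add: zee_def)

lemma mexp_log_H: "mexp log_H = H_sum"
proof (rule mseries_eq_if_eq_upto)
  fix w
  have "eq_upto w (mexp log_H) (mexp (log_H_trunc w))"
    by (rule mexp_eq_upto[OF vanishes_below_log_H vanishes_below_log_H_trunc log_H_eq_upto_trunc])
  moreover have "eq_upto w (mexp (log_H_trunc w)) H_sum"
  proof (rule eq_uptoI)
    fix M assume M: "wt M \<le> w"
    have exp_trunc: "mexp (log_H_trunc w) = (\<Prod>j\<in>{1..w}. mexp (mconst (1 / of_nat j) * mvar j))"
      unfolding log_H_trunc_def by (rule mexp_sum, simp, rule vanishes_below_mconst_mvar) auto
    show "mcoeff (mexp (log_H_trunc w)) M = mcoeff H_sum M"
    proof (cases "0 \<in># M")
      case True
      then show ?thesis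
        by (auto simp: exp_trunc mcoeff_prod_mexp_mvar H_sum_def)
    next
      case False
      have sub: "set_mset M \<subseteq> {1..w}"
      proof
        fix x assume "x \<in># M"
        then show "x \<in> {1..w}"
          using False in_mset_le_wt[of x M] M by (cases x) auto
      qed
      have "(\<Prod>j\<in>{1..w}. 1 / of_nat (j ^ count M j * fact (count M j)) :: rat) =
            (\<Prod>j\<in>set_mset M. 1 / of_nat (j ^ count M j * fact (count M j)))"
        by (rule prod.mono_neutral_right) (use sub in \<open>auto simp: not_in_iff\<close>)
      with sub False show ?thesis
        by (simp add: exp_trunc mcoeff_prod_mexp_mvar H_sum_def inverse_zee)
    qed
  qed
  ultimately show "eq_upto w (mexp log_H) H_sum"
    by (rule eq_upto_trans)
qed


section \<open>Moebius inversion\<close>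

lemma prime_factorization_prod_primes:
  fixes S :: "nat set"
  assumes "finite S" "\<And>p. p \<in> S \<Longrightarrow> prime p"
  shows "prime_factorization (\<Prod>S) = mset_set S"
proof -
  have "prime_factorization (prod_mset (mset_set S)) = mset_set S"
    by (rule prime_factorization_prod_mset_primes) (use assms in auto)
  then show ?thesis
    by (simp add: prod_unfold_prod_mset)
qed

lemma squarefree_prime_factorization:
  fixes d :: nat
  assumes "squarefree d"
  shows "prime_factorization d = mset_set (prime_factors d)"
proof (rule multiset_eqI)
  fix p
  have d0: "d \<noteq> 0" using assms by (cases "d = 0") auto
  have le: "count (prime_factorization d) p \<le> 1"
    using assms d0 by (auto simp: squarefree_factorial_semiring'' count_prime_factorization)
  show "count (prime_factorization d) p = count (mset_set (prime_factors d)) p"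
  proof (cases "p \<in># prime_factorization d")
    case True
    hence "count (prime_factorization d) p > 0" by simp
    hence "count (prime_factorization d) p = 1" using le by linarith
    thus ?thesis using True by (simp add: count_mset_set)
  next
    case False
    thus ?thesis by (simp add: not_in_iff count_mset_set)
  qed
qed

lemma squarefree_prod_prime_factors:
  fixes d :: nat
  assumes "squarefree d"
  shows "\<Prod>(prime_factors d) = d"
proof -
  have "d \<noteq> 0" using assms by (cases "d = 0") auto
  hence "prod_mset (prime_factorization d) = d" by (simp add: prod_mset_prime_factorization)
  thus ?thesis using squarefree_prime_factorization[OF assms] by (simp add: prod_unfold_prod_mset)
qed

lemma bij_betw_squarefree_divisors_prime_factors:
  fixes q :: nat
  assumes "q > 0"
  shows "bij_betw prime_factors {d. d dvd q \<and> squarefree d} (Pow (prime_factors q))"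
proof (rule bij_betw_byWitness[where f' = "\<lambda>S. \<Prod>S"])
  show "\<forall>d\<in>{d. d dvd q \<and> squarefree d}. \<Prod>(prime_factors d) = d"
    by (auto simp: squarefree_prod_prime_factors)
  show "prime_factors ` {d. d dvd q \<and> squarefree d} \<subseteq> Pow (prime_factors q)"
    using assms by (auto dest: dvd_prime_factors[rotated])
  have S: "finite S" "\<And>p. p \<in> S \<Longrightarrow> prime p" if "S \<in> Pow (prime_factors q)" for S
    using that finite_subset[OF _ finite_set_mset] by auto
  then show "\<forall>S\<in>Pow (prime_factors q). prime_factors (\<Prod>S) = S"
    by (simp add: prime_factorization_prod_primes)
  show "(\<lambda>S. \<Prod>S) ` Pow (prime_factors q) \<subseteq> {d. d dvd q \<and> squarefree d}"
  proof clarify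
    fix S assume "S \<subseteq> prime_factors q"
    with S have fin: "finite S" and pr: "\<And>p. p \<in> S \<Longrightarrow> prime p"
      by auto
    have "\<Prod>S \<noteq> 0"
      using fin pr by (metis prod_zero_iff not_prime_0)
    moreover have "mset_set S \<subseteq># prime_factorization q"
    proof (rule mset_subset_eqI)
      fix p
      show "count (mset_set S) p \<le> count (prime_factorization q) p"
        using \<open>S \<subseteq> prime_factors q\<close> fin by (cases "p \<in> S") (auto simp: count_mset_set Suc_le_eq)
    qed
    then have "prime_factorization (\<Prod>S) \<subseteq># prime_factorization q"
      by (simp add: prime_factorization_prod_primes[OF fin pr])
    ultimately have "\<Prod>S dvd q"
      by (rule prime_factorization_subset_imp_dvd)
    moreover have "squarefree (\<Prod>S)"
      using pr by (intro squarefree_prod_coprime[of S id, simplified])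
                  (auto intro: primes_coprime squarefree_prime)
    ultimately show "\<Prod>S dvd q \<and> squarefree (\<Prod>S)" ..
  qed
qed

lemma sum_moebius_divisors:
  fixes q :: nat
  assumes "q > 0"
  shows "(\<Sum>d | d dvd q. moebius d) = (if q = 1 then 1 else 0)"
proof -
  have "(\<Sum>d | d dvd q. moebius d) = (\<Sum>d | d dvd q \<and> squarefree d. (-1) ^ card (prime_factors d))"
  proof (rule sum.mono_neutral_cong_right)
    show "\<forall>d\<in>{d. d dvd q} - {d. d dvd q \<and> squarefree d}. moebius d = 0"
      by (auto simp: moebius_def)
    show "moebius d = (- 1) ^ card (prime_factors d)" if "d \<in> {d. d dvd q \<and> squarefree d}" for d
      using that by (auto simp: moebius_def intro: Nat.gr0I)
  qed (use assms in auto)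
  also have "\<dots> = (\<Sum>S\<in>Pow (prime_factors q). (-1) ^ card S)"
    by (rule sum.reindex_bij_betw[OF bij_betw_squarefree_divisors_prime_factors[OF assms]])
  also have "\<dots> = (\<Prod>p\<in>prime_factors q. 1 - 1)"
    using prod_diff_conv_sum[of "prime_factors q" "\<lambda>_. 1::int" "\<lambda>_. 1"] by simp
  also have "\<dots> = (if q = 1 then 1 else 0)"
  proof (cases "q = 1")
    case False
    then obtain p where "prime p" "p dvd q"
      using prime_factor_nat[of q] by blast
    with assms have "prime_factors q \<noteq> {}"
      by (auto simp: prime_factors_dvd)
    with False show ?thesis
      by (simp add: card_gt_0_iff)
  qed simp
  finally show ?thesis .
qed

lemma sum_mult_eq_indicator:
  fixes n q w :: nat
  assumes "n > 0" "q > 0" "q \<le> w"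
  shows "(\<Sum>j\<in>{1..w}. if j * n = q then c else 0) = (if n dvd q then c else 0)"
proof -
  have "j * n = q \<longleftrightarrow> n dvd q \<and> j = q div n" for j
    using \<open>n > 0\<close> by auto
  moreover have "q div n \<in> {1..w}" if "n dvd q"
  proof -
    have "q div n \<le> w"
      using div_le_dividend[of q n] assms(3) by linarith
    moreover have "q div n \<noteq> 0"
      using that assms by (auto simp: dvd_div_eq_0_iff)
    ultimately show ?thesis
      by simp
  qed
  ultimately show ?thesis
    by (auto simp: sum.delta' cong: conj_cong)
qed

lemma sum_moebius_factorizations:
  fixes q w :: nat
  assumes "q > 0" "q \<le> w"
  shows "(\<Sum>n\<in>{1..w}. \<Sum>j\<in>{1..w}. if j * n = q then (of_int (moebius n) :: rat) / of_nat q else 0)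
           = (if q = 1 then 1 else 0)"
proof -
  have "(\<Sum>n\<in>{1..w}. \<Sum>j\<in>{1..w}. if j * n = q then (of_int (moebius n) :: rat) / of_nat q else 0)
        = (\<Sum>n\<in>{1..w}. if n dvd q then of_int (moebius n) / of_nat q else 0)"
    using assms by (intro sum.cong refl sum_mult_eq_indicator) auto
  also have "\<dots> = (\<Sum>n | n dvd q. of_int (moebius n)) / of_nat q"
  proof -
    have "n \<in> {1..w}" if "n dvd q" for n
      using that assms dvd_imp_le[OF that] dvd_pos_nat[OF _ that] by auto
    then have "{n \<in> {1..w}. n dvd q} = {n. n dvd q}"
      by auto
    then show ?thesis
      by (simp add: sum.inter_filter[symmetric] sum_divide_distrib)
  qed
  also have "\<dots> = (if q = 1 then 1 else 0)"
    using sum_moebius_divisors[OF \<open>q > 0\<close>] by (simp flip: of_int_sum)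
  finally show ?thesis .
qed

lemma moebius_double_sum:
  fixes i v w :: nat
  assumes i: "i > 0" and "v \<le> w"
  shows "(\<Sum>j\<in>{1..w}. \<Sum>n\<in>{1..w}.
            if i * j * n = v then (of_int (moebius n) :: rat) / (of_nat j * of_nat n) else 0)
         = (if v = i then 1 else 0)"
proof (cases "i dvd v \<and> v > 0")
  case False
  then have "i * j * n \<noteq> v" if "j \<in> {1..w}" "n \<in> {1..w}" for j n
    using that i by (auto simp: mult.assoc)
  moreover have "v \<noteq> i"
    using False i by auto
  ultimately show ?thesis
    by simp
next
  case True
  then obtain q where v: "v = i * q"
    by blast
  with True have "q > 0"
    by (auto intro: gr0I)
  have "q \<le> v"
    unfolding v using i by simp
  with \<open>v \<le> w\<close> have "q \<le> w"
    by linarith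
  have "(\<Sum>j\<in>{1..w}. \<Sum>n\<in>{1..w}.
            if i * j * n = v then (of_int (moebius n) :: rat) / (of_nat j * of_nat n) else 0)
        = (\<Sum>n\<in>{1..w}. \<Sum>j\<in>{1..w}. if j * n = q then of_int (moebius n) / of_nat q else 0)"
    using v i by (subst sum.swap) (intro sum.cong refl, auto simp: mult.assoc simp flip: of_nat_mult)
  also have "\<dots> = (if v = i then 1 else 0)"
    using sum_moebius_factorizations[OF \<open>q > 0\<close> \<open>q \<le> w\<close>] v i by simp
  finally show ?thesis .
qed

lemma sf_add_eq: "sf_add f g = mcoeff (Abs_mseries f + Abs_mseries g)"
  by (simp add: fun_eq_iff sf_add_def plus_mseries_def)

lemma sf_pow_eq: "sf_pow f n = mcoeff (Abs_mseries f ^ n)"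
  by (induction n) (auto simp: one_mseries_def times_mseries_def Abs_mseries_inverse mcoeff_inverse)

lemma subst_eq_msubst: "subst \<sigma> f = mcoeff (msubst (\<lambda>i. Abs_mseries (\<sigma> i)) (Abs_mseries f))"
  by (simp add: msubst_def)

definition pleth_p_subst :: "nat \<Rightarrow> nat \<Rightarrow> mseries" where
  "pleth_p_subst k i = (if i = 0 then mvar 0 ^ k else mvar (k * i))"

definition pleth_subst :: "mseries \<Rightarrow> nat \<Rightarrow> mseries" where
  "pleth_subst G i = (if i = 0 then mvar 0 else msubst (pleth_p_subst i) G)"

definition invDelta_subst :: "nat \<Rightarrow> mseries" where
  "invDelta_subst i = (if i = 0 then mvar 0 else mvar 0 ^ i + mvar i)"

definition T_subst :: "nat \<Rightarrow> mseries" where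
  "T_subst i = (if i = 0 then mvar 0 else Abs_mseries (T_img i))"

lemma pleth_p_eq: "pleth_p k g = mcoeff (msubst (pleth_p_subst k) (Abs_mseries g))"
proof -
  have "(\<lambda>i. Abs_mseries (if i = 0 then sf_pow (sf_var 0) k else sf_var (k * i))) = pleth_p_subst k"
    by (auto simp: pleth_p_subst_def sf_pow_eq mcoeff_inverse fun_eq_iff simp flip: mvar_def)
  then show ?thesis
    by (simp add: pleth_p_def subst_eq_msubst)
qed

lemma sf_pleth_eq: "sf_pleth f g = mcoeff (msubst (pleth_subst (Abs_mseries g)) (Abs_mseries f))"
proof -
  have "(\<lambda>i. Abs_mseries (if i = 0 then sf_var 0 else pleth_p i g)) = pleth_subst (Abs_mseries g)"
    by (auto simp: pleth_subst_def pleth_p_eq mvar_def mcoeff_inverse fun_eq_iff)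
  then show ?thesis
    by (simp add: sf_pleth_def subst_eq_msubst)
qed

lemma sf_invDelta_eq: "sf_invDelta f = mcoeff (msubst invDelta_subst (Abs_mseries f))"
proof -
  have "(\<lambda>i. Abs_mseries (if i = 0 then sf_var 0 else sf_add (sf_pow (sf_var 0) i) (sf_var i))) =
          invDelta_subst"
    by (auto simp: invDelta_subst_def sf_add_eq sf_pow_eq mvar_def mcoeff_inverse fun_eq_iff)
  then show ?thesis
    by (simp add: sf_invDelta_def subst_eq_msubst)
qed

lemma sf_T_eq: "sf_T f = mcoeff (msubst T_subst (Abs_mseries f))"
proof -
  have "(\<lambda>i. Abs_mseries (if i = 0 then sf_var 0 else T_img i)) = T_subst"
    by (auto simp: T_subst_def mvar_def fun_eq_iff)
  then show ?thesis
    by (simp add: sf_T_def subst_eq_msubst)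
qed

lemma raises_wt_pleth_p_subst: "raises_wt k (pleth_p_subst k)"
  unfolding raises_wt_def
proof
  fix i
  show "vanishes_below (k * max i 1) (pleth_p_subst k i)"
  proof (cases "i = 0")
    case False
    have "vanishes_below (k * i) (mvar (k * i))"
      using vanishes_below_mvar[of "k * i"] by (rule vanishes_below_mono) simp
    with False show ?thesis
      by (simp add: pleth_p_subst_def)
  qed (simp add: pleth_p_subst_def vanishes_below_mvar_power)
qed

lemma admissible_pleth_p_subst: "k > 0 \<Longrightarrow> admissible (pleth_p_subst k)"
  by (rule raises_wt_mono[OF raises_wt_pleth_p_subst]) simp

lemma admissible_pleth_subst:
  assumes "vanishes_below 1 G"
  shows "admissible (pleth_subst G)"
  unfolding raises_wt_def
proof
  fix i
  show "vanishes_below (1 * max i 1) (pleth_subst G i)"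
  proof (cases "i = 0")
    case False
    have "vanishes_below (i * 1) (msubst (pleth_p_subst i) G)"
      by (rule vanishes_below_msubst[OF raises_wt_pleth_p_subst assms])
    with False show ?thesis
      by (simp add: pleth_subst_def)
  qed (use vanishes_below_mvar[of 0] in \<open>simp add: pleth_subst_def\<close>)
qed

lemma admissible_invDelta_subst: "admissible invDelta_subst"
  unfolding raises_wt_def
proof
  fix i
  show "vanishes_below (1 * max i 1) (invDelta_subst i)"
  proof (cases "i = 0")
    case False
    have "vanishes_below i (mvar i)"
      using vanishes_below_mvar[of i] False by simp
    with False show ?thesis
      by (simp add: invDelta_subst_def vanishes_below_add vanishes_below_mvar_power)
  qed (use vanishes_below_mvar[of 0] in \<open>simp add: invDelta_subst_def\<close>)
qed

lemma msubst_pleth_p_subst_mvar: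
  "k > 0 \<Longrightarrow> j > 0 \<Longrightarrow> msubst (pleth_p_subst k) (mvar j) = mvar (k * j)"
  by (simp add: msubst_mvar[OF admissible_pleth_p_subst] pleth_p_subst_def)

lemma Exp_p1_eq: "Abs_mseries (sf_Exp (sf_var 1)) = H_sum - 1"
proof (rule mseries_eqI)
  fix M
  have "pleth_subst (mvar 1) = mvar"
    by (auto simp: fun_eq_iff pleth_subst_def msubst_pleth_p_subst_mvar)
  then have h: "sf_pleth (sf_h n) (sf_var 1) = sf_h n" for n
    by (simp add: sf_pleth_eq msubst_mvar_id flip: mvar_def)
  have "mcoeff (Abs_mseries (sf_Exp (sf_var 1))) M = (\<Sum>n\<in>{1..wt M}. sf_h n M)"
    by (simp add: sf_Exp_def h del: One_nat_def)
  also have "\<dots> = mcoeff (H_sum - 1) M"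
  proof (cases "0 \<in># M \<or> M = {#}")
    case False
    then have "(\<Sum>n\<in>{1..wt M}. sf_h n M) = (\<Sum>n\<in>{1..wt M}. if n = wt M then 1 / zee M else 0)"
      by (intro sum.cong refl) (auto simp: sf_h_def wt_eq_sum_mset)
    also have "\<dots> = 1 / zee M"
      using False by (simp add: wt_eq_0_iff Suc_le_eq)
    finally show ?thesis
      using False by (simp add: H_sum_def mcoeff_1)
  qed (auto simp: sf_h_def H_sum_def mcoeff_1 zee_def)
  finally show "mcoeff (Abs_mseries (sf_Exp (sf_var 1))) M = mcoeff (H_sum - 1) M" .
qed

lemma vanishes_below_H_sum_minus_1: "vanishes_below 1 (H_sum - 1)"
  by (auto simp: vanishes_below_def H_sum_def mcoeff_1 wt_eq_0_iff zee_def)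


lemma mcoeff_fps_at_mvar:
  assumes "v > 0"
  shows "mcoeff (fps_at F (mvar v)) M = (if set_mset M \<subseteq> {v} then F $ size M else 0)"
proof -
  have "mcoeff (fps_at F (mvar v)) M = (\<Sum>k\<le>wt M. F $ k * (if M = replicate_mset k v then 1 else 0))"
    by (simp add: mcoeff_fps_at[OF vanishes_below_mvar_pos[OF assms]] mcoeff_mvar_power)
  also have "\<dots> = (if set_mset M \<subseteq> {v} then F $ size M else 0)"
  proof (cases "set_mset M \<subseteq> {v}")
    case True
    then have "M = replicate_mset k v \<longleftrightarrow> k = size M" for k
      by (metis set_mset_subset_singleton_iff size_replicate_mset)
    then have "(\<Sum>k\<le>wt M. F $ k * (if M = replicate_mset k v then 1 else 0)) =
               (\<Sum>k\<le>wt M. if k = size M then F $ k else 0)"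
      by (intro sum.cong refl) simp
    with True show ?thesis
      using size_le_wt[of M] by simp
  next
    case False
    then have "M \<noteq> replicate_mset k v" for k
      by (metis set_mset_subset_singleton_iff size_replicate_mset)
    with False show ?thesis
      by simp
  qed
  finally show ?thesis .
qed

lemma sf_log1p_mvar:
  assumes "v > 0"
  shows "sf_log1p (mcoeff (mvar v)) M = mcoeff (fps_at (fps_ln 1) (mvar v)) M"
proof -
  have "sf_log1p (mcoeff (mvar v)) M = (\<Sum>k\<in>{1..wt M}. (-1) ^ (k + 1) / of_nat k * mcoeff (mvar v ^ k) M)"
    by (simp add: sf_log1p_def sf_pow_eq mcoeff_inverse)
  also have "\<dots> = (\<Sum>k\<in>{1..wt M}. fps_ln 1 $ k * mcoeff (mvar v ^ k) M)"
  proof (intro sum.cong refl)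
    fix k :: nat assume "k \<in> {1..wt M}"
    then have "(-1::rat) ^ (k + 1) = (-1) ^ (k - 1)"
      by (cases k) auto
    with \<open>k \<in> {1..wt M}\<close> show "(-1) ^ (k + 1) / of_nat k * mcoeff (mvar v ^ k) M =
                                  fps_ln 1 $ k * mcoeff (mvar v ^ k) M"
      by (simp add: fps_ln_nth)
  qed
  also have "\<dots> = (\<Sum>k\<le>wt M. fps_ln 1 $ k * mcoeff (mvar v ^ k) M)"
    by (rule sum.mono_neutral_left) (auto simp: fps_ln_nth)
  also have "\<dots> = mcoeff (fps_at (fps_ln 1) (mvar v)) M"
    by (simp add: mcoeff_fps_at[OF vanishes_below_mvar_pos[OF assms]])
  finally show ?thesis .
qed

definition Log_one_plus_p1 :: mseries where
  "Log_one_plus_p1 = Abs_mseries (sf_Log (sf_add sf_one (sf_var 1)))"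

definition Log_trunc :: "nat \<Rightarrow> mseries" where
  "Log_trunc w = (\<Sum>n\<in>{1..w}. mconst (of_int (moebius n) / of_nat n) * fps_at (fps_ln 1) (mvar n))"

lemma Log_one_plus_p1_eq_upto_trunc: "eq_upto w Log_one_plus_p1 (Log_trunc w)"
proof (rule eq_uptoI)
  fix M assume M: "wt M \<le> w"
  let ?t = "\<lambda>n. of_int (moebius n) / of_nat n * mcoeff (fps_at (fps_ln 1) (mvar n)) M"
  have p1: "(\<lambda>M. sf_add sf_one (sf_var 1) M - sf_one M) = mcoeff (mvar 1)"
    by (auto simp: sf_add_def mvar_def fun_eq_iff)
  have "pleth_p n (mcoeff (mvar 1)) = mcoeff (mvar n)" if "n > 0" for n
    using that by (simp add: pleth_p_eq msubst_pleth_p_subst_mvar mcoeff_inverse)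
  then have "mcoeff Log_one_plus_p1 M = (\<Sum>n\<in>{1..wt M}. ?t n)"
    unfolding Log_one_plus_p1_def sf_Log_def Let_def p1 mcoeff_Abs_mseries
    by (intro sum.cong refl) (simp add: sf_log1p_mvar del: One_nat_def)
  also have "\<dots> = (\<Sum>n\<in>{1..w}. ?t n)"
  proof (rule sum.mono_neutral_left)
    show "\<forall>n\<in>{1..w} - {1..wt M}. ?t n = 0"
    proof
      fix n assume n: "n \<in> {1..w} - {1..wt M}"
      have "\<not> (set_mset M \<subseteq> {n} \<and> M \<noteq> {#})"
        using n in_mset_le_wt[of _ M] by (auto simp: subset_singleton_iff)
      with n show "?t n = 0"
        by (auto simp: mcoeff_fps_at_mvar)
    qed
  qed (use M in auto)
  also have "\<dots> = mcoeff (Log_trunc w) M"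
    by (simp add: Log_trunc_def mcoeff_sum mcoeff_mconst_mult)
  finally show "mcoeff Log_one_plus_p1 M = mcoeff (Log_trunc w) M" .
qed

lemma vanishes_below_Log_one_plus_p1: "vanishes_below 1 Log_one_plus_p1"
  unfolding vanishes_below_def
proof (intro allI impI)
  fix M :: "nat multiset" assume "wt M < 1"
  then show "mcoeff Log_one_plus_p1 M = 0"
    using eq_uptoD[OF Log_one_plus_p1_eq_upto_trunc[of 0], of M] by (simp add: Log_trunc_def)
qed


lemma msubst_pleth_p_subst_Log_trunc:
  assumes "m > 0"
  shows "msubst (pleth_p_subst m) (Log_trunc w) =
           (\<Sum>n\<in>{1..w}. mconst (of_int (moebius n) / of_nat n) * fps_at (fps_ln 1) (mvar (m * n)))"
  unfolding Log_trunc_def msubst_sum msubst_mconst_mult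
  by (intro sum.cong refl)
     (simp add: msubst_fps_at[OF admissible_pleth_p_subst[OF assms] vanishes_below_mvar_pos]
                msubst_pleth_p_subst_mvar assms)

lemma moebius_ln_sum_eq_upto:
  assumes i: "i > 0"
  shows "eq_upto w
           (\<Sum>j\<in>{1..w}. mconst (1 / of_nat j) *
              (\<Sum>n\<in>{1..w}. mconst (of_int (moebius n) / of_nat n) * fps_at (fps_ln 1) (mvar (i * j * n))))
           (fps_at (fps_ln 1) (mvar i))"
    (is "eq_upto w ?D _")
proof (rule eq_uptoI)
  fix M assume M: "wt M \<le> w"
  have D: "mcoeff ?D M = (\<Sum>j\<in>{1..w}. \<Sum>n\<in>{1..w}. 1 / of_nat j * (of_int (moebius n) / of_nat n) *
                           (if set_mset M \<subseteq> {i * j * n} then fps_ln 1 $ size M else 0))"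
    unfolding mcoeff_sum mcoeff_mconst_mult
    by (intro sum.cong refl) (simp add: mcoeff_fps_at_mvar i sum_distrib_left mult.assoc)
  show "mcoeff ?D M = mcoeff (fps_at (fps_ln 1) (mvar i)) M"
  proof (cases "\<exists>u. u \<in># M \<and> set_mset M \<subseteq> {u}")
    case True
    then obtain u where u: "u \<in># M" and singleton: "set_mset M \<subseteq> {x} \<longleftrightarrow> x = u" for x
      by blast
    have "u \<le> w"
      using in_mset_le_wt[OF u] M by simp
    have "mcoeff ?D M = (\<Sum>j\<in>{1..w}. \<Sum>n\<in>{1..w}. if i * j * n = u then
                           (of_int (moebius n) :: rat) / (of_nat j * of_nat n) else 0) * fps_ln 1 $ size M"
      unfolding D sum_distrib_right by (intro sum.cong refl) (auto simp: singleton)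
    also have "\<dots> = (if u = i then 1 else 0) * fps_ln 1 $ size M"
      by (simp only: moebius_double_sum[OF i \<open>u \<le> w\<close>])
    also have "\<dots> = mcoeff (fps_at (fps_ln 1) (mvar i)) M"
      by (auto simp: mcoeff_fps_at_mvar i singleton)
    finally show ?thesis .
  next
    case False
    then have "(if set_mset M \<subseteq> {x} then fps_ln (1::rat) $ size M else 0) = 0" for x
      by (cases "M = {#}") (auto simp: fps_ln_nth)
    then show ?thesis
      unfolding D by (simp add: mcoeff_fps_at_mvar i)
  qed
qed

lemma sum_pleth_Log_eq_upto_ln:
  assumes i: "i > 0"
  shows "eq_upto w (\<Sum>j\<in>{1..w}. mconst (1 / of_nat j) * msubst (pleth_p_subst (i * j)) Log_one_plus_p1)
                   (fps_at (fps_ln 1) (mvar i))"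
proof (rule eq_upto_trans[OF _ moebius_ln_sum_eq_upto[OF i]])
  show "eq_upto w (\<Sum>j\<in>{1..w}. mconst (1 / of_nat j) * msubst (pleth_p_subst (i * j)) Log_one_plus_p1)
          (\<Sum>j\<in>{1..w}. mconst (1 / of_nat j) *
             (\<Sum>n\<in>{1..w}. mconst (of_int (moebius n) / of_nat n) * fps_at (fps_ln 1) (mvar (i * j * n))))"
  proof (intro eq_upto_sum eq_upto_mult eq_upto_refl)
    fix j assume "j \<in> {1..w}"
    then have "i * j > 0"
      using i by auto
    have "eq_upto w (msubst (pleth_p_subst (i * j)) Log_one_plus_p1)
            (msubst (pleth_p_subst (i * j)) (Log_trunc w))"
      by (rule msubst_eq_upto[OF Log_one_plus_p1_eq_upto_trunc])
    then show "eq_upto w (msubst (pleth_p_subst (i * j)) Log_one_plus_p1)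
                 (\<Sum>n\<in>{1..w}. mconst (of_int (moebius n) / of_nat n) * fps_at (fps_ln 1) (mvar (i * j * n)))"
      unfolding msubst_pleth_p_subst_Log_trunc[OF \<open>i * j > 0\<close>] .
  qed
qed

lemma fps_ln_nth_mult_minus_one_power:
  assumes "k > 0"
  shows "fps_ln 1 $ k * (-1) ^ k = - (1 / (of_nat k :: rat))"
proof -
  obtain m where k: "k = Suc m"
    using assms by (cases k) auto
  have "(-1::rat) ^ m * (-1) ^ m = 1"
    by (simp flip: power_mult_distrib)
  then have "(-1::rat) ^ m * (-1) ^ Suc m = -1"
    by simp
  then show ?thesis
    by (simp add: fps_ln_nth k field_simps)
qed

lemma vanishes_below_minus_x_power: "i > 0 \<Longrightarrow> vanishes_below 1 (- (mvar 0 ^ i))"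
  using vanishes_below_mvar_power[of i] by (auto intro: vanishes_below_uminus vanishes_below_mono)

lemma sum_x_powers_eq_upto_ln:
  assumes i: "i > 0"
  shows "eq_upto w (\<Sum>j\<in>{1..w}. mconst (1 / of_nat j) * mvar 0 ^ (i * j))
                   (- fps_at (fps_ln 1) (- (mvar 0 ^ i)))"
proof (rule eq_uptoI)
  fix M assume M: "wt M \<le> w"
  define t where "t k = (if k = 0 then 0 else (1 / of_nat k :: rat) * (if M = replicate_mset (i * k) 0 then 1 else 0))" for k
  have t0: "t k = 0" if "k > wt M" for k
  proof -
    have "M \<noteq> replicate_mset (i * k) 0"
    proof
      assume "M = replicate_mset (i * k) 0"
      then have "wt M = i * k"
        by simp
      moreover have "k \<le> i * k"
        using i by simp
      ultimately show False
        using that by linarith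
    qed
    then show ?thesis
      by (simp add: t_def)
  qed
  have "mcoeff (\<Sum>j\<in>{1..w}. mconst (1 / of_nat j) * mvar 0 ^ (i * j)) M = (\<Sum>j\<in>{1..w}. t j)"
    by (simp add: mcoeff_sum mcoeff_mconst_mult mcoeff_mvar_power t_def)
  also have "\<dots> = (\<Sum>j\<le>w. t j)"
    by (rule sum.mono_neutral_left) (auto simp: t_def)
  also have "\<dots> = (\<Sum>j\<le>wt M. t j)"
    by (rule sum.mono_neutral_right) (use M t0 in auto)
  also have "\<dots> = (\<Sum>k\<le>wt M. - (fps_ln 1 $ k * (-1) ^ k) * (if M = replicate_mset (i * k) 0 then 1 else 0))"
    by (intro sum.cong refl) (auto simp: t_def fps_ln_nth_mult_minus_one_power)
  also have "\<dots> = - (\<Sum>k\<le>wt M. fps_ln 1 $ k * mcoeff ((- (mvar 0 ^ i)) ^ k) M)"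
    by (simp add: power_minus[of "mvar 0 ^ i"] minus_one_power_eq_mconst mcoeff_mconst_mult
                  power_mult[symmetric] mcoeff_mvar_power sum_negf mult.assoc)
  also have "\<dots> = mcoeff (- fps_at (fps_ln 1) (- (mvar 0 ^ i))) M"
    by (simp add: mcoeff_fps_at[OF vanishes_below_minus_x_power[OF i]])
  finally show "mcoeff (\<Sum>j\<in>{1..w}. mconst (1 / of_nat j) * mvar 0 ^ (i * j)) M =
                mcoeff (- fps_at (fps_ln 1) (- (mvar 0 ^ i))) M" .
qed


lemma mset_split_zeros: "M = filter_mset (\<lambda>j. j \<noteq> 0) M + replicate_mset (count M 0) 0"
  by (rule multiset_eqI) auto

lemma mcoeff_T_img_plus_1:
  fixes N :: "nat multiset"
  assumes i: "i > 0"
  defines "R \<equiv> filter_mset (\<lambda>j. j \<noteq> 0) N"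
  shows "mcoeff (Abs_mseries (T_img i) + 1) N =
           (if (R = {#} \<or> R = {#i#}) \<and> i dvd count N 0 then 1 else 0)"
proof -
  define k where "k = count N 0"
  have N: "N = R + replicate_mset k 0"
    unfolding R_def k_def by (rule mset_split_zeros)
  have "mcoeff (Abs_mseries (T_img i) + 1) N = T_img i N + (if N = {#} then 1 else 0)"
    by (simp add: mcoeff_1)
  also have "\<dots> = (if (R = {#} \<or> R = {#i#}) \<and> i dvd k then 1 else 0)"
  proof (cases "N = {#}")
    case True
    then have "R = {#}" "k = 0"
      by (auto simp: R_def k_def)
    with True i show ?thesis
      by (simp add: T_img_def)
  next
    case False
    have "T_img i N = (if (R = {#} \<or> R = {#i#}) \<and> i dvd k then 1 else 0)"
    proof (cases "R = {#} \<and> i dvd k \<and> \<not> i \<le> k")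
      case True
      then have "k = 0"
        using i by (metis dvd_imp_le gr0I)
      with True N False show ?thesis
        by simp
    next
      case False
      then show ?thesis
        unfolding T_img_def Let_def R_def[symmetric] k_def[symmetric] by auto
    qed
    with False show ?thesis
      by simp
  qed
  finally show ?thesis
    by (simp add: k_def)
qed

lemma mcoeff_mult_one_minus_x_power:
  "mcoeff (f * (1 - mvar 0 ^ i)) M =
     mcoeff f M - (if i \<le> count M 0 then mcoeff f (M - replicate_mset i 0) else 0)"
proof -
  have "replicate_mset i 0 \<subseteq># M \<longleftrightarrow> i \<le> count M 0"
    by (auto simp: subseteq_mset_def split: if_splits)
  then show ?thesis
    by (simp add: right_diff_distrib mvar_power mult.commute[of f] mcoeff_mmonom_mult)
qed

lemma mcoeff_1_plus_mvar:
  fixes M :: "nat multiset"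
  assumes "i > 0"
  defines "R \<equiv> filter_mset (\<lambda>j. j \<noteq> 0) M"
  shows "mcoeff (1 + mvar i) M = (if (R = {#} \<or> R = {#i#}) \<and> count M 0 = 0 then 1 else 0)"
proof -
  have M: "M = R + replicate_mset (count M 0) 0"
    unfolding R_def by (rule mset_split_zeros)
  have "M = {#} \<longleftrightarrow> R = {#} \<and> count M 0 = 0"
    using M by auto
  moreover have "M = {#i#} \<longleftrightarrow> R = {#i#} \<and> count M 0 = 0"
  proof
    assume "M = {#i#}"
    with assms show "R = {#i#} \<and> count M 0 = 0"
      by (simp add: R_def)
  qed (use M in simp)
  ultimately show ?thesis
    by (auto simp: mcoeff_1 mcoeff_mvar)
qed

lemma T_img_plus_1_mult:
  assumes i: "i > 0"
  shows "(Abs_mseries (T_img i) + 1) * (1 - mvar 0 ^ i) = 1 + mvar i"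
proof (rule mseries_eqI)
  fix M :: "nat multiset"
  define R where "R = filter_mset (\<lambda>j. j \<noteq> 0) M"
  define k where "k = count M 0"
  have "filter_mset (\<lambda>j. j \<noteq> 0) (M - replicate_mset i 0) = R"
    by (rule multiset_eqI) (simp add: R_def)
  then have "mcoeff ((Abs_mseries (T_img i) + 1) * (1 - mvar 0 ^ i)) M =
               (if (R = {#} \<or> R = {#i#}) \<and> i dvd k then 1 else 0) -
               (if i \<le> k then (if (R = {#} \<or> R = {#i#}) \<and> i dvd (k - i) then 1 else 0) else 0)"
    using mcoeff_T_img_plus_1[OF i, of M] mcoeff_T_img_plus_1[OF i, of "M - replicate_mset i 0"]
    by (simp add: mcoeff_mult_one_minus_x_power R_def k_def)
  also have "\<dots> = (if (R = {#} \<or> R = {#i#}) \<and> k = 0 then 1 else 0)"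
  proof (cases "i \<le> k")
    case True
    then have "i dvd k \<longleftrightarrow> i dvd (k - i)"
      by (simp add: dvd_minus_self)
    with True i show ?thesis
      by auto
  next
    case False
    then have "i dvd k \<longleftrightarrow> k = 0"
      by (auto dest: dvd_imp_le intro: gr0I)
    with False show ?thesis
      by auto
  qed
  also have "\<dots> = mcoeff (1 + mvar i) M"
    by (simp only: mcoeff_1_plus_mvar[OF i] R_def k_def)
  finally show "mcoeff ((Abs_mseries (T_img i) + 1) * (1 - mvar 0 ^ i)) M = mcoeff (1 + mvar i) M" .
qed

definition composite_subst :: "nat \<Rightarrow> nat \<Rightarrow> mseries" where
  "composite_subst i j =
     msubst (pleth_subst Log_one_plus_p1) (msubst invDelta_subst (pleth_p_subst i j))"

lemma admissible_composite_subst: "i > 0 \<Longrightarrow> admissible (composite_subst i)"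
  unfolding composite_subst_def
  by (intro raises_wt_msubst_comp admissible_pleth_subst vanishes_below_Log_one_plus_p1
            admissible_invDelta_subst admissible_pleth_p_subst)

lemma composite_subst_pos:
  assumes "i > 0" "j > 0"
  shows "composite_subst i j = mvar 0 ^ (i * j) + msubst (pleth_p_subst (i * j)) Log_one_plus_p1"
proof -
  have L: "admissible (pleth_subst Log_one_plus_p1)"
    by (rule admissible_pleth_subst[OF vanishes_below_Log_one_plus_p1])
  have "msubst invDelta_subst (pleth_p_subst i j) = mvar 0 ^ (i * j) + mvar (i * j)"
    using assms by (simp add: pleth_p_subst_def msubst_mvar[OF admissible_invDelta_subst] invDelta_subst_def)
  then show ?thesis
    using assms by (simp add: composite_subst_def msubst_add msubst_power[OF L] msubst_mvar[OF L]
                              pleth_subst_def del: One_nat_def)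
qed

lemma msubst_composite_subst_log_H:
  assumes i: "i > 0"
  shows "msubst (composite_subst i) log_H =
           - fps_at (fps_ln 1) (- (mvar 0 ^ i)) + fps_at (fps_ln 1) (mvar i)"
proof (rule mseries_eq_if_eq_upto)
  fix w
  have "msubst (composite_subst i) (log_H_trunc w) =
          (\<Sum>j\<in>{1..w}. mconst (1 / of_nat j) * mvar 0 ^ (i * j)) +
          (\<Sum>j\<in>{1..w}. mconst (1 / of_nat j) * msubst (pleth_p_subst (i * j)) Log_one_plus_p1)"
    unfolding log_H_trunc_def msubst_sum msubst_mconst_mult msubst_mvar[OF admissible_composite_subst[OF i]]
    by (simp add: composite_subst_pos i distrib_left sum.distrib)
  then show "eq_upto w (msubst (composite_subst i) log_H)
               (- fps_at (fps_ln 1) (- (mvar 0 ^ i)) + fps_at (fps_ln 1) (mvar i))"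
    using msubst_eq_upto[OF log_H_eq_upto_trunc, of w "composite_subst i"]
          eq_upto_add[OF sum_x_powers_eq_upto_ln[OF i] sum_pleth_Log_eq_upto_ln[OF i]]
    by (auto intro: eq_upto_trans)
qed

lemma mexp_minus_ln_one_minus_x_power_mult:
  assumes i: "i > 0"
  shows "mexp (- fps_at (fps_ln 1) (- (mvar 0 ^ i))) * (1 + mvar i) = Abs_mseries (T_img i) + 1"
proof -
  define A where "A = - fps_at (fps_ln 1) (- (mvar 0 ^ i))"
  have A: "vanishes_below 1 A"
    unfolding A_def by (intro vanishes_below_uminus vanishes_below_fps_at vanishes_below_minus_x_power i) simp
  have exp_minus_A: "mexp (- A) = 1 - mvar 0 ^ i"
    using mexp_fps_at_ln[OF vanishes_below_minus_x_power[OF i]] by (simp add: A_def)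
  have inverse: "mexp A * mexp (- A) = 1"
    using mexp_add[OF A vanishes_below_uminus[OF A]] by (simp add: mexp_0)
  have "mexp A * (1 + mvar i) = mexp A * ((Abs_mseries (T_img i) + 1) * (1 - mvar 0 ^ i))"
    by (simp add: T_img_plus_1_mult[OF i])
  also have "\<dots> = (Abs_mseries (T_img i) + 1) * (mexp A * mexp (- A))"
    by (simp add: exp_minus_A ac_simps)
  also have "\<dots> = Abs_mseries (T_img i) + 1"
    by (simp add: inverse)
  finally show ?thesis
    by (simp add: A_def)
qed

lemma pleth_Log_invDelta_pleth_p_H:
  assumes i: "i > 0"
  shows "msubst (pleth_subst Log_one_plus_p1) (msubst invDelta_subst (msubst (pleth_p_subst i) (H_sum - 1)))
           = Abs_mseries (T_img i)"
proof -
  define A where "A = - fps_at (fps_ln 1) (- (mvar 0 ^ i))"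
  have A: "vanishes_below 1 A"
    unfolding A_def by (intro vanishes_below_uminus vanishes_below_fps_at vanishes_below_minus_x_power i) simp
  have p: "vanishes_below 1 (fps_at (fps_ln 1) (mvar i))"
    by (intro vanishes_below_fps_at vanishes_below_mvar_pos i) simp
  have "msubst (pleth_subst Log_one_plus_p1) (msubst invDelta_subst (msubst (pleth_p_subst i) F))
          = msubst (composite_subst i) F" for F
    unfolding composite_subst_def
    by (rule msubst_msubst_msubst[OF admissible_pleth_subst[OF vanishes_below_Log_one_plus_p1]
                                     admissible_invDelta_subst admissible_pleth_p_subst[OF i]])
  moreover have "msubst (composite_subst i) (H_sum - 1) = mexp A * (1 + mvar i) - 1"
    by (simp add: msubst_diff msubst_mexp[OF admissible_composite_subst[OF i] vanishes_below_log_H]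
                  msubst_composite_subst_log_H[OF i] mexp_add[OF A p]
                  mexp_fps_at_ln[OF vanishes_below_mvar_pos[OF i]]
             flip: mexp_log_H A_def)
  ultimately show ?thesis
    by (simp add: A_def mexp_minus_ln_one_minus_x_power_mult[OF i])
qed

theorem lemma3p6:
  fixes f :: sfx
  assumes "\<forall>M. 0 \<in># M \<longrightarrow> f M = 0"
  shows "sf_T f = sf_pleth (sf_invDelta (sf_pleth f (sf_Exp (sf_var 1))))
                           (sf_Log (sf_add sf_one (sf_var 1)))"
proof -
  let ?E = "pleth_subst (H_sum - 1)" and ?L = "pleth_subst Log_one_plus_p1"
  have E: "admissible ?E"
    by (rule admissible_pleth_subst[OF vanishes_below_H_sum_minus_1])
  have L: "admissible ?L"
    by (rule admissible_pleth_subst[OF vanishes_below_Log_one_plus_p1])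
  have composite: "(\<lambda>i. msubst ?L (msubst invDelta_subst (?E i))) = T_subst"
  proof
    fix i
    show "msubst ?L (msubst invDelta_subst (?E i)) = T_subst i"
      by (cases "i = 0")
         (simp_all add: pleth_subst_def T_subst_def invDelta_subst_def pleth_Log_invDelta_pleth_p_H
                        msubst_mvar[OF L] msubst_mvar[OF admissible_invDelta_subst])
  qed
  have "sf_pleth (sf_invDelta (sf_pleth f (sf_Exp (sf_var 1)))) (sf_Log (sf_add sf_one (sf_var 1))) =
          mcoeff (msubst ?L (msubst invDelta_subst (msubst ?E (Abs_mseries f))))"
    by (simp only: sf_pleth_eq sf_invDelta_eq mcoeff_inverse Exp_p1_eq Log_one_plus_p1_def[symmetric])
  also have "\<dots> = mcoeff (msubst T_subst (Abs_mseries f))"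
    by (simp only: msubst_msubst_msubst[OF L admissible_invDelta_subst E] composite)
  finally show ?thesis
    by (simp add: sf_T_eq)
qed

end
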